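(* There exist absolute constants $q_0$ and $C>0$ such that the following holds. Let $q\geq q_0$ be an integer, let $\Delta\in\mathbb{N}$ with $\Delta\leq\frac{\log q}{\log2}$, and let $n$ be a positive integer. Then \[ \frac{1}{n!}\sum_{j=1}^{\Delta}\sum_{\pi\in S_n}\binom{c_1(\pi^q)+\cdots+c_{j+1}(\pi^q)}{\Delta-j}\leq \begin{cases} C & \text{if }\Delta=1,\\ C\,\sigma_0(q) & \text{if }\Delta=2,\\ C\,\sigma_1(q) & \text{if }\Delta=3,\\ C\,\frac{1}{(\Delta-1)!}q^{\Delta-2} & \text{if }\Delta\geq4. \end{cases} \]
   Context: For a permutation $\sigma\in S_n$ and $d\geq1$, $c_d(\sigma)$ is the number of $d$-cycles of $\sigma$ (zero if $d>n$). For real $\alpha$, $\sigma_\alpha(q)=\sum_{d\mid q}d^\alpha$. $\mathbb{N}$ denotes the positive integers. *)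

theory Defs
  imports Complex_Main "HOL-Combinatorics.Combinatorics"
begin

definition cyc_count :: "nat \<Rightarrow> (nat \<Rightarrow> nat) \<Rightarrow> nat \<Rightarrow> nat" where
  "cyc_count n \<sigma> d = card {orbit \<sigma> x | x. x \<in> {1..n} \<and> card (orbit \<sigma> x) = d}"

definition divisor_sigma :: "real \<Rightarrow> nat \<Rightarrow> real" where
  "divisor_sigma \<alpha> q = (\<Sum>d\<in>{d. d dvd q}. real d powr \<alpha>)"

end

theory Submission
  imports Defs
begin

lemma perm_restrict_permutes_cycle:
  assumes "\<pi> permutes S" "cyclic_on \<pi> C"
  shows "perm_restrict \<pi> C permutes C"
proof (rule bij_imp_permutes)
  have "\<pi> ` C = C"
  proof
    show "\<pi> ` C \<subseteq> C" using assms(2) by (auto simp: cyclic_on_def intro: orbit.intros)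
    show "C \<subseteq> \<pi> ` C"
      using cyclic_on_f_in[OF assms] permutes_surj[OF assms(1)] by (metis image_eqI subsetI surj_def)
  qed
  then have "bij_betw \<pi> C C"
    using permutes_inj[OF assms(1)] by (simp add: bij_betw_def inj_on_def inj_def)
  then show "bij_betw (perm_restrict \<pi> C) C C"
    by (rule bij_betw_cong[THEN iffD1, rotated]) (simp add: perm_restrict_def)
qed (simp add: perm_restrict_def)

lemma perm_restrict_comp_permutes_disjoint:
  assumes "\<tau> permutes C" "\<sigma> permutes (S - C)"
  shows "perm_restrict (\<sigma> \<circ> \<tau>) C = \<tau>" "perm_restrict (\<sigma> \<circ> \<tau>) (S - C) = \<sigma>"
proof -
  show "perm_restrict (\<sigma> \<circ> \<tau>) C = \<tau>"
  proof
    fix x show "perm_restrict (\<sigma> \<circ> \<tau>) C x = \<tau> x"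
      using permutes_in_image[OF assms(1), of x] permutes_not_in[OF assms(1), of x]
        permutes_not_in[OF assms(2), of "\<tau> x"]
      by (cases "x \<in> C") (auto simp: perm_restrict_def)
  qed
  show "perm_restrict (\<sigma> \<circ> \<tau>) (S - C) = \<sigma>"
  proof
    fix x show "perm_restrict (\<sigma> \<circ> \<tau>) (S - C) x = \<sigma> x"
      using permutes_not_in[OF assms(1), of x] permutes_not_in[OF assms(2), of x]
      by (cases "x \<in> S - C") (auto simp: perm_restrict_def)
  qed
qed

lemma bij_betw_cycle_times_rest:
  assumes "finite S" "C \<subseteq> S" "C \<noteq> {}"
  shows "bij_betw (\<lambda>(\<tau>, \<sigma>). \<sigma> \<circ> \<tau>)
           ({\<tau>. \<tau> permutes C \<and> cyclic_on \<tau> C} \<times> {\<sigma>. \<sigma> permutes (S - C)})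
           {\<pi>. \<pi> permutes S \<and> C \<in> orbit \<pi> ` S}"
proof (rule bij_betw_byWitness[where f'="\<lambda>\<pi>. (perm_restrict \<pi> C, perm_restrict \<pi> (S - C))"])
  show "\<forall>a\<in>{\<tau>. \<tau> permutes C \<and> cyclic_on \<tau> C} \<times> {\<sigma>. \<sigma> permutes (S - C)}.
          (\<lambda>\<pi>. (perm_restrict \<pi> C, perm_restrict \<pi> (S - C))) ((\<lambda>(\<tau>, \<sigma>). \<sigma> \<circ> \<tau>) a) = a"
    using perm_restrict_comp_permutes_disjoint by auto
  show "\<forall>a'\<in>{\<pi>. \<pi> permutes S \<and> C \<in> orbit \<pi> ` S}.
          (\<lambda>(\<tau>, \<sigma>). \<sigma> \<circ> \<tau>) ((\<lambda>\<pi>. (perm_restrict \<pi> C, perm_restrict \<pi> (S - C))) a') = a'"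
  proof
    fix \<pi> assume "\<pi> \<in> {\<pi>. \<pi> permutes S \<and> C \<in> orbit \<pi> ` S}"
    then have p: "\<pi> permutes S" and "C \<in> orbit \<pi> ` S" by auto
    then have cyc: "cyclic_on \<pi> C" using cyclic_on_orbit[OF p assms(1)] by auto
    have "perm_restrict \<pi> (S - C) \<circ> perm_restrict \<pi> C = perm_restrict \<pi> ((S - C) \<union> C)"
      by (rule perm_restrict_comp) (use cyc in auto)
    also have "(S - C) \<union> C = S" using assms by auto
    finally show "(\<lambda>(\<tau>, \<sigma>). \<sigma> \<circ> \<tau>) ((\<lambda>\<pi>. (perm_restrict \<pi> C, perm_restrict \<pi> (S - C))) \<pi>) = \<pi>"
      using p by (simp add: comp_def)
  qed
  show "(\<lambda>(\<tau>, \<sigma>). \<sigma> \<circ> \<tau>) ` ({\<tau>. \<tau> permutes C \<and> cyclic_on \<tau> C} \<times> {\<sigma>. \<sigma> permutes (S - C)})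
        \<subseteq> {\<pi>. \<pi> permutes S \<and> C \<in> orbit \<pi> ` S}"
  proof clarsimp
    fix \<tau> \<sigma> assume t: "\<tau> permutes C" "cyclic_on \<tau> C" and s: "\<sigma> permutes (S - C)"
    have ps: "\<sigma> \<circ> \<tau> permutes S"
      by (rule permutes_compose) (use t s assms permutes_subset in auto)
    obtain x where x: "x \<in> C" using assms by auto
    have "orbit (\<sigma> \<circ> \<tau>) x = orbit \<tau> x"
    proof (rule orbit_cong0[where A=C])
      show "x \<in> C" by fact
      show "\<sigma> \<circ> \<tau> \<in> C \<rightarrow> C" using t s permutes_in_image[OF t(1)] permutes_not_in[OF s] by auto
      show "\<And>y. y \<in> C \<Longrightarrow> (\<sigma> \<circ> \<tau>) y = \<tau> y" using permutes_in_image[OF t(1)] permutes_not_in[OF s] by auto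
    qed
    also have "\<dots> = C" using orbit_cyclic_eq3[OF t(2) x] .
    finally show "\<sigma> \<circ> \<tau> permutes S \<and> C \<in> orbit (\<sigma> \<circ> \<tau>) ` S" using ps x assms(2) by force
  qed
  show "(\<lambda>\<pi>. (perm_restrict \<pi> C, perm_restrict \<pi> (S - C))) ` {\<pi>. \<pi> permutes S \<and> C \<in> orbit \<pi> ` S}
        \<subseteq> {\<tau>. \<tau> permutes C \<and> cyclic_on \<tau> C} \<times> {\<sigma>. \<sigma> permutes (S - C)}"
  proof clarsimp
    fix \<pi> x assume p: "\<pi> permutes S" and x: "x \<in> S" and C: "C = orbit \<pi> x"
    have cyc: "cyclic_on \<pi> C" using cyclic_on_orbit[OF p assms(1)] C by auto
    show "perm_restrict \<pi> (orbit \<pi> x) permutes orbit \<pi> x \<and> cyclic_on (perm_restrict \<pi> (orbit \<pi> x)) (orbit \<pi> x) \<and>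
          perm_restrict \<pi> (S - orbit \<pi> x) permutes S - orbit \<pi> x"
      using perm_restrict_permutes_cycle[OF p cyc] cyc perm_restrict_diff_cyclic[OF p cyc]
        cyclic_on_perm_restrict C by auto
  qed
qed

text \<open>Summing over all pairs of a permutation and one of its cycles is the same as choosing the
  cycle first and then an arbitrary permutation of its complement.\<close>

lemma sum_permutes_cycles:
  fixes F :: "'a set \<Rightarrow> ('a \<Rightarrow> 'a) \<Rightarrow> 'b::comm_semiring_1"
  assumes "finite S"
  shows "(\<Sum>\<pi>\<in>{\<pi>. \<pi> permutes S}. \<Sum>c\<in>orbit \<pi> ` S. F c (perm_restrict \<pi> (S - c)))
       = (\<Sum>C\<in>{C. C \<subseteq> S \<and> C \<noteq> {}}. of_nat (card {\<tau>. \<tau> permutes C \<and> cyclic_on \<tau> C})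
            * (\<Sum>\<sigma>\<in>{\<sigma>. \<sigma> permutes (S - C)}. F C \<sigma>))"
proof -
  let ?P = "{C. C \<subseteq> S \<and> C \<noteq> {}}"
  let ?cyc = "\<lambda>C. {\<tau>. \<tau> permutes C \<and> cyclic_on \<tau> C}"
  have cycles_in_P: "orbit \<pi> ` S \<subseteq> ?P" if "\<pi> permutes S" for \<pi>
    using permutes_orbit_subset[OF that] by (auto simp: orbit_nonempty)
  have "(\<Sum>\<pi>\<in>{\<pi>. \<pi> permutes S}. \<Sum>c\<in>orbit \<pi> ` S. F c (perm_restrict \<pi> (S - c)))
      = (\<Sum>\<pi>\<in>{\<pi>. \<pi> permutes S}. \<Sum>C\<in>?P. if C \<in> orbit \<pi> ` S then F C (perm_restrict \<pi> (S - C)) else 0)"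
  proof (rule sum.cong[OF refl])
    fix \<pi> assume "\<pi> \<in> {\<pi>. \<pi> permutes S}"
    then have "orbit \<pi> ` S \<subseteq> ?P" using cycles_in_P by simp
    moreover have "finite ?P" using assms by simp
    ultimately show "(\<Sum>c\<in>orbit \<pi> ` S. F c (perm_restrict \<pi> (S - c)))
        = (\<Sum>C\<in>?P. if C \<in> orbit \<pi> ` S then F C (perm_restrict \<pi> (S - C)) else 0)"
      by (simp add: sum.If_cases Int_absorb1)
  qed
  also have "\<dots> = (\<Sum>C\<in>?P. \<Sum>\<pi>\<in>{\<pi>. \<pi> permutes S}. if C \<in> orbit \<pi> ` S then F C (perm_restrict \<pi> (S - C)) else 0)"
    by (rule sum.swap)
  also have "\<dots> = (\<Sum>C\<in>?P. \<Sum>\<pi>\<in>{\<pi>. \<pi> permutes S \<and> C \<in> orbit \<pi> ` S}. F C (perm_restrict \<pi> (S - C)))"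
    by (rule sum.cong[OF refl], subst sum.inter_filter[symmetric])
       (use finite_permutations[OF assms] in \<open>auto intro!: sum.cong\<close>)
  also have "\<dots> = (\<Sum>C\<in>?P. \<Sum>(\<tau>, \<sigma>)\<in>?cyc C \<times> {\<sigma>. \<sigma> permutes (S - C)}. F C \<sigma>)"
  proof (rule sum.cong[OF refl])
    fix C show "C \<in> ?P \<Longrightarrow> (\<Sum>\<pi>\<in>{\<pi>. \<pi> permutes S \<and> C \<in> orbit \<pi> ` S}. F C (perm_restrict \<pi> (S - C)))
        = (\<Sum>(\<tau>, \<sigma>)\<in>?cyc C \<times> {\<sigma>. \<sigma> permutes (S - C)}. F C \<sigma>)"
    proof -
      assume "C \<in> ?P"
      then have C: "C \<subseteq> S" "C \<noteq> {}" by auto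
      have "(\<Sum>\<pi>\<in>{\<pi>. \<pi> permutes S \<and> C \<in> orbit \<pi> ` S}. F C (perm_restrict \<pi> (S - C)))
        = (\<Sum>x\<in>?cyc C \<times> {\<sigma>. \<sigma> permutes (S - C)}. F C (perm_restrict ((\<lambda>(\<tau>, \<sigma>). \<sigma> \<circ> \<tau>) x) (S - C)))"
        by (rule sum.reindex_bij_betw[symmetric, OF bij_betw_cycle_times_rest[OF assms C]])
      also have "\<dots> = (\<Sum>(\<tau>, \<sigma>)\<in>?cyc C \<times> {\<sigma>. \<sigma> permutes (S - C)}. F C \<sigma>)"
        by (rule sum.cong[OF refl]) (auto simp: perm_restrict_comp_permutes_disjoint)
      finally show ?thesis .
    qed
  qed
  also have "\<dots> = (\<Sum>C\<in>?P. of_nat (card (?cyc C)) * (\<Sum>\<sigma>\<in>{\<sigma>. \<sigma> permutes (S - C)}. F C \<sigma>))"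
    by (simp add: sum.cartesian_product[symmetric])
  finally show ?thesis .
qed

lemma sum_Pow_card:
  fixes h :: "nat \<Rightarrow> 'b::comm_semiring_1"
  assumes "finite A"
  shows "(\<Sum>D\<in>Pow A. h (card D)) = (\<Sum>L\<le>card A. of_nat (card A choose L) * h L)"
proof -
  have "(\<Sum>D\<in>Pow A. h (card D)) = (\<Sum>L\<le>card A. \<Sum>D\<in>{D. D \<in> Pow A \<and> card D = L}. h (card D))"
    by (rule sum.group[symmetric]) (use assms card_mono in auto)
  also have "\<dots> = (\<Sum>L\<le>card A. of_nat (card A choose L) * h L)"
    using n_subsets[OF assms] by (intro sum.cong refl) (simp add: Pow_def)
  finally show ?thesis .
qed

lemma sum_subsets_containing:
  assumes "a \<in> S"
  shows "(\<Sum>C\<in>{C. C \<subseteq> S \<and> a \<in> C}. f C) = (\<Sum>D\<in>Pow (S - {a}). f (insert a D))"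
proof -
  have "{C. C \<subseteq> S \<and> a \<in> C} = insert a ` Pow (S - {a})"
  proof (intro set_eqI iffI)
    fix C assume "C \<in> {C. C \<subseteq> S \<and> a \<in> C}"
    then have "C = insert a (C - {a})" "C - {a} \<in> Pow (S - {a})" by auto
    then show "C \<in> insert a ` Pow (S - {a})" by blast
  qed (use assms in auto)
  moreover have "inj_on (insert a) (Pow (S - {a}))"
    by (rule inj_onI) (metis Diff_insert_absorb PowD insert_Diff_single subset_Diff_insert)
  ultimately show ?thesis by (simp add: sum.reindex)
qed

lemma fact_card_eq_sum_cycles_through:
  assumes "finite S" "a \<in> S"
  shows "fact (card S) = (\<Sum>D\<in>Pow (S - {a}).
           card {\<tau>. \<tau> permutes insert a D \<and> cyclic_on \<tau> (insert a D)} * fact (card S - Suc (card D)))"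
proof -
  let ?cyc = "\<lambda>C. card {\<tau>. \<tau> permutes C \<and> cyclic_on \<tau> C}"
  have one_cycle: "(\<Sum>c\<in>orbit \<pi> ` S. if a \<in> c then 1 else 0) = (1::nat)" if "\<pi> permutes S" for \<pi>
  proof -
    have "permutation \<pi>" using that assms(1) permutation_permutes by blast
    then have "a \<in> orbit \<pi> a" by (rule permutation_self_in_orbit)
    moreover have "orbit \<pi> x = orbit \<pi> a" if "a \<in> orbit \<pi> x" for x
      using orbit_cyclic_eq3[OF cyclic_on_orbit[OF \<open>\<pi> permutes S\<close> assms(1)] that] by simp
    ultimately have "{c \<in> orbit \<pi> ` S. a \<in> c} = {orbit \<pi> a}" using assms(2) by blast
    then show ?thesis using assms(1) by (simp add: sum.If_cases Int_def)
  qed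
  have "fact (card S) = (\<Sum>\<pi>\<in>{\<pi>. \<pi> permutes S}. \<Sum>c\<in>orbit \<pi> ` S. if a \<in> c then 1 else 0 :: nat)"
    using one_cycle card_permutations[OF refl assms(1)] by simp
  also have "\<dots> = (\<Sum>C\<in>{C. C \<subseteq> S \<and> C \<noteq> {}}. ?cyc C * (\<Sum>\<sigma>\<in>{\<sigma>. \<sigma> permutes (S - C)}. if a \<in> C then 1 else 0))"
    using sum_permutes_cycles[OF assms(1), of "\<lambda>c \<sigma>. if a \<in> c then 1 else 0 :: nat"] by simp
  also have "\<dots> = (\<Sum>C\<in>{C. C \<subseteq> S \<and> C \<noteq> {}}. if a \<in> C then ?cyc C * fact (card S - card C) else 0)"
  proof (rule sum.cong[OF refl])
    fix C assume "C \<in> {C. C \<subseteq> S \<and> C \<noteq> {}}"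
    then have "card {\<sigma>. \<sigma> permutes (S - C)} = fact (card S - card C)"
      using assms(1) finite_subset[of C S] by (simp add: card_permutations card_Diff_subset)
    then show "?cyc C * (\<Sum>\<sigma>\<in>{\<sigma>. \<sigma> permutes (S - C)}. if a \<in> C then 1 else 0)
        = (if a \<in> C then ?cyc C * fact (card S - card C) else 0)" by simp
  qed
  also have "\<dots> = (\<Sum>C\<in>{C. C \<subseteq> S \<and> a \<in> C}. ?cyc C * fact (card S - card C))"
  proof -
    have "{C. C \<subseteq> S \<and> C \<noteq> {}} \<inter> {C. a \<in> C} = {C. C \<subseteq> S \<and> a \<in> C}" by auto
    then show ?thesis using assms(1) by (simp add: sum.If_cases)
  qed
  also have "\<dots> = (\<Sum>D\<in>Pow (S - {a}). ?cyc (insert a D) * fact (card S - card (insert a D)))"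
    by (rule sum_subsets_containing[OF assms(2)])
  also have "\<dots> = (\<Sum>D\<in>Pow (S - {a}). ?cyc (insert a D) * fact (card S - Suc (card D)))"
  proof (rule sum.cong[OF refl])
    fix D assume "D \<in> Pow (S - {a})"
    then have "finite D" "a \<notin> D" using assms(1) finite_subset by auto
    then show "?cyc (insert a D) * fact (card S - card (insert a D))
        = ?cyc (insert a D) * fact (card S - Suc (card D))" by simp
  qed
  finally show ?thesis .
qed

lemma card_cyclic_permutations:
  assumes "finite C" "C \<noteq> {}"
  shows "card {\<tau>. \<tau> permutes C \<and> cyclic_on \<tau> C} = fact (card C - 1)"
  using assms
proof (induction "card C" arbitrary: C rule: less_induct)
  case less
  let ?cyc = "\<lambda>C. card {\<tau>. \<tau> permutes C \<and> cyclic_on \<tau> C}"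
  obtain a where a: "a \<in> C" using less.prems(2) by blast
  define A where "A = C - {a}"
  define n where "n = card A"
  have A: "finite A" "A \<in> Pow A" using less.prems(1) by (simp_all add: A_def)
  have card_C: "card C = Suc n"
    using card_Suc_Diff1[OF less.prems(1) a] by (simp add: A_def n_def)
  have smaller: "?cyc (insert a D) = fact (card D)" if "D \<in> Pow A - {A}" for D
  proof -
    have "D \<subset> A" "finite D" "a \<notin> D" using that A(1) finite_subset by (auto simp: A_def)
    moreover have "card (insert a D) < card C"
      using \<open>D \<subset> A\<close> a less.prems(1) by (intro psubset_card_mono) (auto simp: A_def)
    ultimately show ?thesis using less.hyps[of "insert a D"] by simp
  qed
  define rest where "rest = (\<Sum>D\<in>Pow A - {A}. fact (card D) * fact (n - card D) :: nat)"
  have "fact (Suc n) = (\<Sum>D\<in>Pow A. ?cyc (insert a D) * fact (Suc n - Suc (card D)))"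
    using fact_card_eq_sum_cycles_through[OF less.prems(1) a] card_C by (simp add: A_def)
  also have "\<dots> = ?cyc (insert a A) * fact (Suc n - Suc n)
      + (\<Sum>D\<in>Pow A - {A}. ?cyc (insert a D) * fact (Suc n - Suc (card D)))"
    using A by (simp add: sum.remove[OF finite_Pow_iff[THEN iffD2, OF A(1)] A(2)] n_def)
  also have "\<dots> = ?cyc C + rest"
    using a smaller by (simp add: A_def insert_absorb rest_def)
  finally have "fact (Suc n) = ?cyc C + rest" .
  moreover have "(\<Sum>D\<in>Pow A. fact (card D) * fact (n - card D)) = fact n + rest"
    using A by (simp add: sum.remove[OF finite_Pow_iff[THEN iffD2, OF A(1)] A(2)] rest_def n_def)
  moreover have "(\<Sum>D\<in>Pow A. fact (card D) * fact (n - card D)) = Suc n * fact n"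
  proof -
    have "(\<Sum>L\<le>n. (n choose L) * (fact L * fact (n - L))) = (\<Sum>L\<le>n. fact n :: nat)"
      using binomial_fact_lemma by (intro sum.cong refl) (simp add: mult_ac)
    then show ?thesis using sum_Pow_card[OF A(1), of "\<lambda>L. fact L * fact (n - L) :: nat"] by (simp add: n_def)
  qed
  ultimately show ?case using card_C by simp
qed

lemma card_orbit_eq_least_power:
  assumes "permutation p"
  shows "card (orbit p x) = least_power p x"
proof -
  have "orbit p x = set (support p x)"
    using support_set[OF assms, of x] orbit_altdef_permutation[OF assms, of x] by auto
  moreover have "distinct (support p x)" using cycle_of_permutation[OF assms] .
  then have "card (set (support p x)) = length (support p x)" by (rule distinct_card)
  ultimately show ?thesis by simp
qed

lemma funpow_fixes_iff_card_orbit_dvd: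
  assumes "permutation p"
  shows "(p ^^ n) x = x \<longleftrightarrow> card (orbit p x) dvd n"
  using least_power_dvd[OF assms] card_orbit_eq_least_power[OF assms] by simp

lemma card_orbit_dvd_mult_card_orbit_funpow:
  assumes "permutation p"
  shows "card (orbit p x) dvd q * card (orbit (p ^^ q) x)"
proof -
  have "((p ^^ q) ^^ card (orbit (p ^^ q) x)) x = x"
    using funpow_fixes_iff_card_orbit_dvd[OF permutation_funpow[OF assms]] by simp
  then show ?thesis using funpow_fixes_iff_card_orbit_dvd[OF assms] by (simp add: funpow_mult)
qed

lemma orbit_funpow_subset:
  assumes "permutation p"
  shows "orbit (p ^^ q) x \<subseteq> orbit p x"
proof
  fix y assume "y \<in> orbit (p ^^ q) x"
  then obtain m where "y = ((p ^^ q) ^^ m) x"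
    using orbit_altdef_permutation[OF permutation_funpow[OF assms]] by auto
  then show "y \<in> orbit p x" using orbit_altdef_permutation[OF assms] by (auto simp: funpow_mult)
qed

lemma orbits_disjoint:
  assumes "permutation p" "orbit p x \<noteq> orbit p y"
  shows "orbit p x \<inter> orbit p y = {}"
  using orbit_cyclic_eq3[OF cyclic_on_orbit'[OF assms(1)]] assms(2) by blast

lemma card_disjoint_family_mult_le:
  assumes "finite C" "\<And>y. y \<in> Z \<Longrightarrow> y \<subseteq> C" "\<And>y. y \<in> Z \<Longrightarrow> m \<le> card y" "pairwise disjnt Z"
  shows "card Z * m \<le> card C"
proof -
  have "finite Z" using finite_Pow_iff[THEN iffD2, OF assms(1)] assms(2) finite_subset[of Z "Pow C"]
    by blast
  have fin: "\<And>y. y \<in> Z \<Longrightarrow> finite y" using assms(1,2) finite_subset by blast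
  have "card Z * m = (\<Sum>y\<in>Z. m)" by simp
  also have "\<dots> \<le> (\<Sum>y\<in>Z. card y)" using assms(3) by (rule sum_mono)
  also have "\<dots> = card (\<Union>Z)" using card_Union_disjoint[OF assms(4) fin] by simp
  also have "\<dots> \<le> card C" using assms(1,2) by (intro card_mono) auto
  finally show ?thesis .
qed

lemma div_gcd_dvd_of_dvd_mult:
  fixes L q m :: nat
  assumes "L > 0" "L dvd q * m"
  shows "L div gcd L q dvd m"
proof -
  define g where "g = gcd L q"
  have "L = g * (L div g)" "q * m = g * ((q div g) * m)" by (simp_all add: g_def)
  then have "g * (L div g) dvd g * ((q div g) * m)" using assms(2) by metis
  moreover have "g > 0" using assms(1) by (simp add: g_def)
  ultimately have "L div g dvd (q div g) * m" by simp
  moreover have "coprime (L div g) (q div g)" using assms(1) by (simp add: g_def div_gcd_coprime)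
  ultimately show ?thesis using coprime_dvd_mult_right_iff g_def by blast
qed

lemma weighted_vandermonde:
  assumes "w \<ge> 1" "r \<ge> 1"
  shows "w * ((w - 1 + M) choose (r - 1)) = (\<Sum>i=1..r. i * (w choose i) * (M choose (r - i)))"
proof -
  obtain v s where v: "w = Suc v" and s: "r = Suc s" using assms by (metis Suc_le_D One_nat_def)
  have "w * ((w - 1 + M) choose (r - 1)) = Suc v * (\<Sum>j\<le>s. (v choose j) * (M choose (s - j)))"
    using vandermonde[of v M s] by (simp add: v s)
  also have "\<dots> = (\<Sum>j\<le>s. (Suc v * (v choose j)) * (M choose (s - j)))"
    by (simp only: sum_distrib_left mult.assoc)
  also have "\<dots> = (\<Sum>j\<le>s. Suc j * (Suc v choose Suc j) * (M choose (Suc s - Suc j)))"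
    by (intro sum.cong refl) (simp only: Suc_times_binomial_eq, simp)
  also have "\<dots> = (\<Sum>i=Suc 0..Suc s. i * (Suc v choose i) * (M choose (Suc s - i)))"
    by (simp only: atMost_atLeast0 sum.shift_bounds_cl_Suc_ivl)
  finally show ?thesis by (simp add: v s)
qed

definition short_cycles :: "nat \<Rightarrow> nat \<Rightarrow> 'a set \<Rightarrow> ('a \<Rightarrow> 'a) \<Rightarrow> 'a set set" where
  "short_cycles q k S \<pi> = {orbit (\<pi> ^^ q) x | x. x \<in> S \<and> card (orbit (\<pi> ^^ q) x) \<le> k}"

text \<open>Under \<open>\<pi> ^^ q\<close> a cycle of \<open>\<pi>\<close> of length \<open>L\<close> splits into \<open>gcd L q\<close> cycles of length
  \<open>L div gcd L q\<close>; the weight bounds how many of them are short.\<close>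

definition cycle_weight :: "nat \<Rightarrow> nat \<Rightarrow> nat \<Rightarrow> nat" where
  "cycle_weight q k L = (if \<exists>m\<in>{1..k}. L dvd q * m then gcd L q else 0)"

context
  fixes S :: "'a set" and \<pi> :: "'a \<Rightarrow> 'a"
  assumes perm: "\<pi> permutes S" and finite: "finite S"
begin

lemma permutation: "permutation \<pi>"
  using perm finite permutation_permutes by blast

lemma funpow_perm_restrict_outside_cycle:
  assumes "c \<in> orbit \<pi> ` S" "x \<in> S - c"
  shows "(perm_restrict \<pi> (S - c) ^^ n) x = (\<pi> ^^ n) x \<and> (\<pi> ^^ n) x \<in> S - c"
proof (induction n)
  case (Suc n)
  have "cyclic_on \<pi> c" using assms(1) cyclic_on_orbit[OF perm finite] by auto
  then have "\<pi> ((\<pi> ^^ n) x) \<in> S - c"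
    using Suc permutes_in_image[OF perm] cyclic_on_f_in[OF perm] by blast
  then show ?case using Suc by (simp add: perm_restrict_def)
qed (use assms in simp)

lemma orbit_funpow_perm_restrict:
  assumes "c \<in> orbit \<pi> ` S" "x \<in> S - c"
  shows "orbit (perm_restrict \<pi> (S - c) ^^ q) x = orbit (\<pi> ^^ q) x"
proof -
  have "((perm_restrict \<pi> (S - c) ^^ q) ^^ m) x = ((\<pi> ^^ q) ^^ m) x" for m
    using funpow_perm_restrict_outside_cycle[OF assms, of "q * m"] by (simp add: funpow_mult)
  then show ?thesis by (simp add: orbit_altdef)
qed

lemma finite_short_cycles: "finite (short_cycles q k S \<pi>)"
proof -
  have "short_cycles q k S \<pi> \<subseteq> orbit (\<pi> ^^ q) ` S" by (auto simp: short_cycles_def)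
  then show ?thesis using finite finite_subset by blast
qed

lemma card_short_cycles_split:
  assumes c: "c \<in> orbit \<pi> ` S"
  shows "card (short_cycles q k S \<pi>)
    = card {y \<in> short_cycles q k S \<pi>. y \<subseteq> c} + card (short_cycles q k (S - c) (perm_restrict \<pi> (S - c)))"
proof -
  have cyc: "cyclic_on \<pi> c" using c cyclic_on_orbit[OF perm finite] by auto
  have "{y \<in> short_cycles q k S \<pi>. \<not> y \<subseteq> c} = short_cycles q k (S - c) (perm_restrict \<pi> (S - c))"
  proof (intro set_eqI iffI)
    fix y assume "y \<in> {y \<in> short_cycles q k S \<pi>. \<not> y \<subseteq> c}"
    then obtain x where x: "x \<in> S" "y = orbit (\<pi> ^^ q) x" "card y \<le> k" "\<not> y \<subseteq> c"
      by (auto simp: short_cycles_def)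
    have "x \<notin> c"
    proof
      assume "x \<in> c"
      then have "orbit \<pi> x = c" using orbit_cyclic_eq3[OF cyc] by auto
      then show False using x orbit_funpow_subset[OF permutation, of q x] by auto
    qed
    then have "x \<in> S - c" "y = orbit (perm_restrict \<pi> (S - c) ^^ q) x"
      using x orbit_funpow_perm_restrict[OF c] by auto
    then show "y \<in> short_cycles q k (S - c) (perm_restrict \<pi> (S - c))"
      using x(3) unfolding short_cycles_def by blast
  next
    fix y assume "y \<in> short_cycles q k (S - c) (perm_restrict \<pi> (S - c))"
    then obtain x where x: "x \<in> S - c" "y = orbit (\<pi> ^^ q) x" "card y \<le> k"
      using orbit_funpow_perm_restrict[OF c] by (auto simp: short_cycles_def)
    moreover have "x \<in> y" using x permutation_self_in_orbit[OF permutation_funpow[OF permutation]] by simp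
    ultimately show "y \<in> {y \<in> short_cycles q k S \<pi>. \<not> y \<subseteq> c}" unfolding short_cycles_def by auto
  qed
  moreover have "card (short_cycles q k S \<pi>)
      = card {y \<in> short_cycles q k S \<pi>. y \<subseteq> c} + card {y \<in> short_cycles q k S \<pi>. \<not> y \<subseteq> c}"
    using finite_short_cycles by (intro card_Un_disjoint[THEN trans[rotated]] arg_cong[of _ _ card]) auto
  ultimately show ?thesis by simp
qed

lemma card_short_cycles_eq_sum:
  "card (short_cycles q k S \<pi>) = (\<Sum>c\<in>orbit \<pi> ` S. card {y \<in> short_cycles q k S \<pi>. y \<subseteq> c})"
proof -
  let ?Y = "short_cycles q k S \<pi>"
  have union: "?Y = (\<Union>c\<in>orbit \<pi> ` S. {y \<in> ?Y. y \<subseteq> c})"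
  proof (intro set_eqI iffI)
    fix y assume y: "y \<in> ?Y"
    then obtain x where "x \<in> S" "y = orbit (\<pi> ^^ q) x" by (auto simp: short_cycles_def)
    then show "y \<in> (\<Union>c\<in>orbit \<pi> ` S. {y \<in> ?Y. y \<subseteq> c})"
      using y orbit_funpow_subset[OF permutation, of q x] by auto
  qed auto
  have disjoint: "{y \<in> ?Y. y \<subseteq> c1} \<inter> {y \<in> ?Y. y \<subseteq> c2} = {}"
    if "c1 \<in> orbit \<pi> ` S" "c2 \<in> orbit \<pi> ` S" "c1 \<noteq> c2" for c1 c2
  proof -
    have "c1 \<inter> c2 = {}" using that orbits_disjoint[OF permutation] by blast
    moreover have "y \<noteq> {}" if "y \<in> ?Y" for y
      using that by (auto simp: short_cycles_def orbit_nonempty)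
    ultimately show ?thesis by blast
  qed
  have "card (\<Union>c\<in>orbit \<pi> ` S. {y \<in> ?Y. y \<subseteq> c}) = (\<Sum>c\<in>orbit \<pi> ` S. card {y \<in> ?Y. y \<subseteq> c})"
    by (rule card_UN_disjoint) (use finite finite_short_cycles disjoint in auto)
  then show ?thesis using union by simp
qed

lemma short_cycle_in_cycle:
  assumes "c \<in> orbit \<pi> ` S" "y \<in> short_cycles q k S \<pi>" "y \<subseteq> c"
  shows "card c dvd q * card y" "1 \<le> card y" "card y \<le> k"
proof -
  obtain x where x: "y = orbit (\<pi> ^^ q) x" "card y \<le> k"
    using assms(2) by (auto simp: short_cycles_def)
  have "x \<in> y" using x permutation_self_in_orbit[OF permutation_funpow[OF permutation]] by simp
  then have "orbit \<pi> x = c"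
    using assms(1,3) orbit_cyclic_eq3[OF cyclic_on_orbit[OF perm finite]] by auto
  then show "card c dvd q * card y"
    using card_orbit_dvd_mult_card_orbit_funpow[OF permutation] x(1) by metis
  have "finite y" using x(1) finite_orbit permutation_self_in_orbit permutation_funpow[OF permutation]
    by metis
  then show "1 \<le> card y" using \<open>x \<in> y\<close> by (metis One_nat_def Suc_leI card_gt_0_iff empty_iff)
  show "card y \<le> k" by (fact x(2))
qed

lemma card_short_cycles_in_cycle_le:
  assumes c: "c \<in> orbit \<pi> ` S"
  shows "card {y \<in> short_cycles q k S \<pi>. y \<subseteq> c} \<le> cycle_weight q k (card c)"
proof (cases "{y \<in> short_cycles q k S \<pi>. y \<subseteq> c} = {}")
  case False
  define Z where "Z = {y \<in> short_cycles q k S \<pi>. y \<subseteq> c}"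
  define L where "L = card c"
  define g where "g = gcd L q"
  obtain x where "c = orbit \<pi> x" using c by blast
  then have "finite c" "c \<noteq> {}"
    using finite_orbit[OF permutation_self_in_orbit[OF permutation]] orbit_nonempty by simp_all
  then have "L > 0" by (simp add: L_def card_gt_0_iff)
  have Z: "L dvd q * card y" "1 \<le> card y" "card y \<le> k" if "y \<in> Z" for y
    using short_cycle_in_cycle[OF c] that by (auto simp: Z_def L_def)
  obtain y0 where "y0 \<in> Z" using False Z_def by auto
  then have "\<exists>m\<in>{1..k}. L dvd q * m" using Z[of y0] by (intro bexI[of _ "card y0"]) auto
  then have weight: "cycle_weight q k L = g" by (simp add: cycle_weight_def g_def)
  have "card Z * (L div g) \<le> card c"
  proof (rule card_disjoint_family_mult_le)
    show "L div g \<le> card y" if "y \<in> Z" for y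
      using div_gcd_dvd_of_dvd_mult[OF \<open>L > 0\<close> Z(1)[OF that]] Z(2)[OF that]
      by (simp add: g_def dvd_imp_le)
    show "pairwise disjnt Z"
    proof (rule pairwiseI)
      fix y1 y2 assume "y1 \<in> Z" "y2 \<in> Z" "y1 \<noteq> y2"
      then obtain x1 x2 where "y1 = orbit (\<pi> ^^ q) x1" "y2 = orbit (\<pi> ^^ q) x2"
        by (auto simp: Z_def short_cycles_def)
      then show "disjnt y1 y2"
        using orbits_disjoint[OF permutation_funpow[OF permutation]] \<open>y1 \<noteq> y2\<close>
        by (simp add: disjnt_def)
    qed
    show "y \<subseteq> c" if "y \<in> Z" for y using that by (simp add: Z_def)
  qed fact
  also have "card c = g * (L div g)" by (simp add: L_def g_def)
  finally have "card Z * (L div g) \<le> g * (L div g)" .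
  moreover have "L div g > 0" using \<open>L > 0\<close> by (simp add: g_def div_greater_zero_iff gcd_le1_nat)
  ultimately have "card Z \<le> g" by simp
  then show ?thesis using weight by (simp add: Z_def L_def)
qed (metis card.empty zero_le)

text \<open>Double counting: \<open>r\<close>-subsets of short cycles with a marked element, grouped by the cycle
  of \<open>\<pi>\<close> containing the marked short cycle.\<close>

lemma choose_short_cycles_le_sum:
  assumes "r \<ge> 1"
  shows "r * (card (short_cycles q k S \<pi>) choose r)
     \<le> (\<Sum>c\<in>orbit \<pi> ` S. \<Sum>i=1..r. i * (cycle_weight q k (card c) choose i)
            * (card (short_cycles q k (S - c) (perm_restrict \<pi> (S - c))) choose (r - i)))"
proof -
  define N where "N = card (short_cycles q k S \<pi>)"
  define m where "m c = card {y \<in> short_cycles q k S \<pi>. y \<subseteq> c}" for c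
  have "r * (N choose r) = N * ((N - 1) choose (r - 1))"
    using binomial_absorption[of "r - 1" N] assms by simp
  also have "\<dots> = (\<Sum>c\<in>orbit \<pi> ` S. m c * ((N - 1) choose (r - 1)))"
    using card_short_cycles_eq_sum by (simp add: N_def m_def sum_distrib_right)
  finally have "r * (N choose r) = \<dots>" .
  moreover have "m c * ((N - 1) choose (r - 1)) \<le> (\<Sum>i=1..r. i * (cycle_weight q k (card c) choose i)
      * (card (short_cycles q k (S - c) (perm_restrict \<pi> (S - c))) choose (r - i)))"
    if c: "c \<in> orbit \<pi> ` S" for c
  proof (cases "m c = 0")
    case False
    define M where "M = card (short_cycles q k (S - c) (perm_restrict \<pi> (S - c)))"
    define w where "w = cycle_weight q k (card c)"
    have "N = m c + M" using card_short_cycles_split[OF c] by (simp add: N_def m_def M_def)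
    moreover have "m c \<le> w" using card_short_cycles_in_cycle_le[OF c] by (simp add: m_def w_def)
    ultimately have "m c * ((N - 1) choose (r - 1)) \<le> w * ((w - 1 + M) choose (r - 1))"
      using False by (intro mult_mono binomial_right_mono) auto
    also have "\<dots> = (\<Sum>i=1..r. i * (w choose i) * (M choose (r - i)))"
      using weighted_vandermonde \<open>m c \<le> w\<close> False assms by simp
    finally show ?thesis by (simp add: w_def M_def)
  qed simp
  ultimately show ?thesis unfolding N_def by (simp add: sum_mono)
qed

end



lemma cycle_weight_eq_0:
  assumes "q \<ge> 1" "L > k * q"
  shows "cycle_weight q k L = 0"
proof -
  have "\<not> L dvd q * m" if "m \<in> {1..k}" for m
  proof
    assume "L dvd q * m"
    then have "L \<le> q * m" using that assms(1) by (intro dvd_imp_le) auto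
    also have "\<dots> \<le> k * q" using that by (simp add: mult.commute)
    finally show False using assms(2) by simp
  qed
  then show ?thesis by (auto simp: cycle_weight_def)
qed

definition cycle_weight_sum :: "nat \<Rightarrow> nat \<Rightarrow> nat \<Rightarrow> real" where
  "cycle_weight_sum q k t = (\<Sum>L\<in>{1..k * q}. real (cycle_weight q k L choose t) / real L)"

lemma sum_cycle_weight_le:
  assumes "q \<ge> 1" "t \<ge> 1"
  shows "(\<Sum>L\<in>{1..n}. real (cycle_weight q k L choose t) / real L) \<le> cycle_weight_sum q k t"
proof -
  have "(\<Sum>L\<in>{1..n}. real (cycle_weight q k L choose t) / real L)
      = (\<Sum>L\<in>{1..n} \<inter> {1..k * q}. real (cycle_weight q k L choose t) / real L)"
    by (rule sum.mono_neutral_right) (use cycle_weight_eq_0[OF assms(1)] assms(2) in auto)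
  also have "\<dots> \<le> cycle_weight_sum q k t" unfolding cycle_weight_sum_def by (rule sum_mono2) auto
  finally show ?thesis .
qed

lemma sum_nonempty_subsets_by_card:
  fixes g :: "nat \<Rightarrow> real"
  assumes "finite S"
  shows "(\<Sum>C\<in>{C. C \<subseteq> S \<and> C \<noteq> {}}. fact (card C - 1) * fact (card S - card C) * g (card C))
       = fact (card S) * (\<Sum>L=1..card S. g L / real L)"
proof -
  define n where "n = card S"
  define h where "h L = (if L = 0 then 0 else fact (L - 1) * fact (n - L) * g L)" for L
  have "(\<Sum>C\<in>{C. C \<subseteq> S \<and> C \<noteq> {}}. fact (card C - 1) * fact (n - card C) * g (card C))
      = (\<Sum>C\<in>Pow S. h (card C))"
    using assms by (intro sum.mono_neutral_cong_left) (auto simp: h_def dest: finite_subset)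
  also have "\<dots> = (\<Sum>L=1..n. real (n choose L) * h L)"
    using sum_Pow_card[OF assms, of h] by (simp add: n_def atMost_atLeast0 sum.atLeast_Suc_atMost h_def)
  also have "\<dots> = (\<Sum>L=1..n. fact n * (g L / real L))"
  proof (rule sum.cong[OF refl])
    fix L assume L: "L \<in> {1..n}"
    then have "real (n choose L) * (fact L * fact (n - L)) = fact n"
      using binomial_fact_lemma[of L n] by (metis atLeastAtMost_iff mult.commute of_nat_fact of_nat_mult)
    moreover have "(fact L :: real) = real L * fact (L - 1)" using L by (simp add: fact_reduce)
    ultimately show "real (n choose L) * h L = fact n * (g L / real L)"
      using L by (simp add: h_def field_simps)
  qed
  finally show ?thesis by (simp add: n_def sum_distrib_left)
qed


lemma sum_choose_short_cycles_step:
  fixes B :: "nat \<Rightarrow> real" and S :: "'a set"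
  assumes S: "finite S" and q: "q \<ge> 1" and r: "r \<ge> 1" and B: "\<And>i. B i \<ge> 0"
    and IH: "\<And>i (T :: 'a set). i \<in> {1..r} \<Longrightarrow> finite T \<Longrightarrow>
      (\<Sum>\<sigma>\<in>{\<sigma>. \<sigma> permutes T}. real (card (short_cycles q k T \<sigma>) choose (r - i))) \<le> fact (card T) * B (r - i)"
  shows "real r * (\<Sum>\<pi>\<in>{\<pi>. \<pi> permutes S}. real (card (short_cycles q k S \<pi>) choose r))
    \<le> fact (card S) * (\<Sum>i=1..r. real i * cycle_weight_sum q k i * B (r - i))"
proof -
  define w where "w L i = real i * real (cycle_weight q k L choose i)" for L i
  define \<Phi> where "\<Phi> C \<sigma> = (\<Sum>i=1..r. w (card C) i * real (card (short_cycles q k (S - C) \<sigma>) choose (r - i)))"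
    for C \<sigma>
  define g where "g L = (\<Sum>i=1..r. w L i * B (r - i))" for L
  have rest: "(\<Sum>\<sigma>\<in>{\<sigma>. \<sigma> permutes (S - C)}. \<Phi> C \<sigma>) \<le> fact (card S - card C) * g (card C)"
    if "C \<subseteq> S" for C
  proof -
    have "(\<Sum>\<sigma>\<in>{\<sigma>. \<sigma> permutes (S - C)}. \<Phi> C \<sigma>) = (\<Sum>i=1..r. w (card C) i *
        (\<Sum>\<sigma>\<in>{\<sigma>. \<sigma> permutes (S - C)}. real (card (short_cycles q k (S - C) \<sigma>) choose (r - i))))"
      unfolding \<Phi>_def by (subst sum.swap) (simp add: sum_distrib_left)
    also have "\<dots> \<le> (\<Sum>i=1..r. w (card C) i * (fact (card (S - C)) * B (r - i)))"
      using IH[where T = "S - C"] S by (intro sum_mono mult_left_mono) (auto simp: w_def)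
    also have "card (S - C) = card S - card C"
      using that S by (simp add: card_Diff_subset finite_subset)
    finally show ?thesis by (simp add: g_def sum_distrib_left mult_ac)
  qed
  have "real r * (\<Sum>\<pi>\<in>{\<pi>. \<pi> permutes S}. real (card (short_cycles q k S \<pi>) choose r))
      \<le> (\<Sum>\<pi>\<in>{\<pi>. \<pi> permutes S}. \<Sum>c\<in>orbit \<pi> ` S. \<Phi> c (perm_restrict \<pi> (S - c)))"
    unfolding sum_distrib_left \<Phi>_def w_def
    using choose_short_cycles_le_sum[OF _ S r]
    by (intro sum_mono) (simp only: of_nat_mult[symmetric] of_nat_sum[symmetric] of_nat_le_iff mem_Collect_eq)
  also have "\<dots> = (\<Sum>C\<in>{C. C \<subseteq> S \<and> C \<noteq> {}}. fact (card C - 1) * (\<Sum>\<sigma>\<in>{\<sigma>. \<sigma> permutes (S - C)}. \<Phi> C \<sigma>))"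
  proof -
    have "real (card {\<tau>. \<tau> permutes C \<and> cyclic_on \<tau> C}) = fact (card C - 1)"
      if "C \<in> {C. C \<subseteq> S \<and> C \<noteq> {}}" for C
      using that card_cyclic_permutations[of C] finite_subset[OF _ S] by simp
    then show ?thesis unfolding sum_permutes_cycles[OF S, of \<Phi>] by (intro sum.cong refl) simp
  qed
  also have "\<dots> \<le> (\<Sum>C\<in>{C. C \<subseteq> S \<and> C \<noteq> {}}. fact (card C - 1) * fact (card S - card C) * g (card C))"
    using rest by (intro sum_mono) (simp add: mult.assoc)
  also have "\<dots> = fact (card S) * (\<Sum>L=1..card S. g L / real L)"
    by (rule sum_nonempty_subsets_by_card[OF S])
  also have "(\<Sum>L=1..card S. g L / real L)
      = (\<Sum>i=1..r. real i * B (r - i) * (\<Sum>L=1..card S. real (cycle_weight q k L choose i) / real L))"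
    unfolding g_def w_def sum_divide_distrib sum_distrib_left by (subst sum.swap) (simp add: mult_ac)
  also have "\<dots> \<le> (\<Sum>i=1..r. real i * B (r - i) * cycle_weight_sum q k i)"
    using sum_cycle_weight_le[OF q] B by (intro sum_mono mult_left_mono) auto
  finally show ?thesis by (simp add: mult_ac)
qed

lemma sum_choose_short_cycles_le:
  fixes B :: "nat \<Rightarrow> real"
  assumes q: "q \<ge> 1" and B: "B 0 = 1" "\<And>r. B r \<ge> 0"
    and rec: "\<And>r. 1 \<le> r \<Longrightarrow> r \<le> R \<Longrightarrow> (\<Sum>i=1..r. real i * cycle_weight_sum q k i * B (r - i)) \<le> real r * B r"
    and "r \<le> R" "finite S"
  shows "(\<Sum>\<pi>\<in>{\<pi>. \<pi> permutes S}. real (card (short_cycles q k S \<pi>) choose r)) \<le> fact (card S) * B r"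
  using assms(5,6)
proof (induction r arbitrary: S rule: less_induct)
  case (less r)
  show ?case
  proof (cases "r = 0")
    case True
    then show ?thesis using B(1) card_permutations[OF refl less.prems(2)] by simp
  next
    case False
    have IH: "(\<Sum>\<sigma>\<in>{\<sigma>. \<sigma> permutes T}. real (card (short_cycles q k T \<sigma>) choose (r - i)))
        \<le> fact (card T) * B (r - i)" if "i \<in> {1..r}" "finite T" for i and T :: "'a set"
      using less.IH[of "r - i" T] less.prems(1) that by auto
    have "real r * (\<Sum>\<pi>\<in>{\<pi>. \<pi> permutes S}. real (card (short_cycles q k S \<pi>) choose r))
        \<le> fact (card S) * (\<Sum>i=1..r. real i * cycle_weight_sum q k i * B (r - i))"
      using False IH by (intro sum_choose_short_cycles_step[OF less.prems(2) q _ B(2)]) auto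
    also have "\<dots> \<le> fact (card S) * (real r * B r)"
      using rec False less.prems(1) by (intro mult_left_mono) auto
    finally show ?thesis using False by (simp add: mult.left_commute[of "real r"])
  qed
qed


lemma divisor_sigma_0_eq_card:
  assumes "q > 0"
  shows "divisor_sigma 0 q = real (card {d. d dvd q})"
proof -
  have "divisor_sigma 0 q = (\<Sum>d\<in>{d. d dvd q}. 1)"
    unfolding divisor_sigma_def using assms by (intro sum.cong refl) (auto dest: dvd_pos_nat)
  then show ?thesis by simp
qed

lemma divisor_sigma_1_eq_sum: "divisor_sigma 1 q = (\<Sum>d\<in>{d. d dvd q}. real d)"
  by (simp add: divisor_sigma_def)

lemma divisor_sigma_0_ge_1:
  assumes "q > 0"
  shows "1 \<le> divisor_sigma 0 q"
proof -
  have "card {1::nat} \<le> card {d. d dvd q}" using assms by (intro card_mono finite_divisors_nat) auto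
  then show ?thesis using assms by (simp add: divisor_sigma_0_eq_card)
qed

lemma divisor_sigma_1_ge:
  assumes "q > 0"
  shows "real q \<le> divisor_sigma 1 q"
  using assms member_le_sum[of q "{d. d dvd q}" real] by (simp add: divisor_sigma_1_eq_sum)

lemma divisor_sigma_0_le_1:
  assumes "q > 0"
  shows "divisor_sigma 0 q \<le> divisor_sigma 1 q"
proof -
  have "(\<Sum>d\<in>{d. d dvd q}. 1::real) \<le> (\<Sum>d\<in>{d. d dvd q}. real d)"
    using assms by (intro sum_mono) (auto simp: dvd_pos_nat Suc_le_eq)
  then show ?thesis using assms by (simp add: divisor_sigma_0_eq_card divisor_sigma_1_eq_sum)
qed

lemma divisor_sigma_1_le:
  assumes "q > 0"
  shows "divisor_sigma 1 q \<le> real q * divisor_sigma 0 q"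
proof -
  have "(\<Sum>d\<in>{d. d dvd q}. real d) \<le> (\<Sum>d\<in>{d. d dvd q}. real q)"
    using assms by (intro sum_mono) (auto simp: dvd_imp_le)
  then show ?thesis using assms by (simp add: divisor_sigma_0_eq_card divisor_sigma_1_eq_sum mult.commute)
qed

text \<open>The divisors \<open>d\<close> with \<open>d * d > q\<close> are the cofactors of those with \<open>d * d \<le> q\<close>, and there
  are at most \<open>sqrt q\<close> of the latter.\<close>

lemma divisor_sigma_0_squared_le:
  assumes "q > 0"
  shows "(divisor_sigma 0 q)\<^sup>2 \<le> 4 * real q"
proof -
  define D where "D = {d. d dvd q}"
  define D1 where "D1 = {d \<in> D. d * d \<le> q}"
  have "finite D" using assms by (simp add: D_def)
  then have "finite D1" by (simp add: D1_def)
  have "D \<subseteq> D1 \<union> (\<lambda>e. q div e) ` D1"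
  proof
    fix d assume "d \<in> D"
    then obtain e where e: "q = d * e" by (auto simp: D_def)
    have "d > 0" "e > 0" using e assms by auto
    show "d \<in> D1 \<union> (\<lambda>e. q div e) ` D1"
    proof (cases "d * d \<le> q")
      case False
      then have "e * e \<le> q" using e by (metis mult_le_mono1 nat_le_linear mult.commute)
      then have "e \<in> D1" using e by (simp add: D1_def D_def)
      moreover have "d = q div e" using e \<open>e > 0\<close> by simp
      ultimately show ?thesis by blast
    qed (use \<open>d \<in> D\<close> in \<open>simp add: D1_def\<close>)
  qed
  then have "card D \<le> card D1 + card ((\<lambda>e. q div e) ` D1)"
    using \<open>finite D1\<close> by (meson card_Un_le card_mono finite_UnI finite_imageI order_trans)
  also have "\<dots> \<le> 2 * card D1" using card_image_le[OF \<open>finite D1\<close>] by simp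
  finally have card_D: "card D \<le> 2 * card D1" .
  have "card D1 * card D1 \<le> q"
  proof (cases "D1 = {}")
    case False
    define M where "M = Max D1"
    have "M \<in> D1" using False \<open>finite D1\<close> by (simp add: M_def)
    have "D1 \<subseteq> {1..M}" using \<open>finite D1\<close> assms by (auto simp: M_def D1_def D_def dvd_pos_nat Suc_le_eq)
    then have "card D1 \<le> M" using card_mono[of "{1..M}" D1] by simp
    then have "card D1 * card D1 \<le> M * M" by (simp add: mult_le_mono)
    also have "\<dots> \<le> q" using \<open>M \<in> D1\<close> by (simp add: D1_def)
    finally show ?thesis .
  qed simp
  then have "card D * card D \<le> 4 * q" using card_D mult_le_mono[OF card_D card_D] by linarith
  then show ?thesis
    using assms by (simp add: divisor_sigma_0_eq_card D_def power2_eq_square flip: of_nat_mult)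
qed


lemma sum_inverse_squares_le: "(\<Sum>e=1..n. 1 / (real e)\<^sup>2) \<le> 2 - 1 / real (max n 1)"
proof (induction n)
  case (Suc n)
  show ?case
  proof (cases "n = 0")
    case False
    have "1 / (real (Suc n))\<^sup>2 \<le> 1 / (real n * real (Suc n))"
      using False by (intro divide_left_mono) (auto simp: power2_eq_square)
    also have "\<dots> = 1 / real n - 1 / real (Suc n)" using False by (simp add: field_simps)
    finally show ?thesis using Suc False by simp
  qed simp
qed simp

lemma sum_divisors_cofactor:
  fixes q :: nat
  assumes "q > 0"
  shows "(\<Sum>d\<in>{d. d dvd q}. f d) = (\<Sum>d\<in>{d. d dvd q}. f (q div d))"
proof (rule sum.reindex_bij_betw[symmetric], rule bij_betw_byWitness[where f' = "\<lambda>d. q div d"])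
  have "q div (q div d) = d \<and> q div d dvd q" if d: "d dvd q" for d
  proof -
    obtain e where "q = d * e" using d by blast
    moreover have "d \<noteq> 0" "e \<noteq> 0" using calculation assms by auto
    ultimately show ?thesis by simp
  qed
  then show "\<forall>d\<in>{d. d dvd q}. q div (q div d) = d" "\<forall>d\<in>{d. d dvd q}. q div (q div d) = d"
    "(\<lambda>d. q div d) ` {d. d dvd q} \<subseteq> {d. d dvd q}" "(\<lambda>d. q div d) ` {d. d dvd q} \<subseteq> {d. d dvd q}"
    by auto
qed

lemma sum_divisors_power_le:
  assumes "q > 0" "t \<ge> 2"
  shows "(\<Sum>d\<in>{d. d dvd q}. (real d)^t) \<le> 2 * (real q)^t"
proof -
  have "(\<Sum>d\<in>{d. d dvd q}. (real d)^t) = (\<Sum>e\<in>{e. e dvd q}. (real q)^t * (1 / (real e)^t))"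
    using assms(1) by (subst sum_divisors_cofactor) (auto intro!: sum.cong simp: real_of_nat_div power_divide)
  also have "\<dots> \<le> (\<Sum>e\<in>{e. e dvd q}. (real q)^t * (1 / (real e)\<^sup>2))"
  proof (rule sum_mono)
    show "(real q)^t * (1 / (real e)^t) \<le> (real q)^t * (1 / (real e)\<^sup>2)" if "e \<in> {e. e dvd q}" for e
      using that assms dvd_pos_nat[of q e]
      by (intro mult_left_mono divide_left_mono power_increasing) (auto simp: Suc_le_eq)
  qed
  also have "\<dots> \<le> (\<Sum>e\<in>{1..q}. (real q)^t * (1 / (real e)\<^sup>2))"
    by (rule sum_mono2) (use assms(1) in \<open>auto simp: dvd_imp_le dvd_pos_nat Suc_le_eq\<close>)
  also have "\<dots> = (real q)^t * (\<Sum>e=1..q. 1 / (real e)\<^sup>2)" by (simp add: sum_distrib_left)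
  also have "\<dots> \<le> (real q)^t * 2"
    by (intro mult_left_mono order_trans[OF sum_inverse_squares_le]) auto
  finally show ?thesis by simp
qed

definition divisor_choose_sum :: "nat \<Rightarrow> nat \<Rightarrow> real" where
  "divisor_choose_sum q t = (\<Sum>d\<in>{d. d dvd q}. real (d choose t) / real d)"

lemma divisor_choose_sum_1:
  assumes "q > 0"
  shows "divisor_choose_sum q 1 = divisor_sigma 0 q"
proof -
  have "divisor_choose_sum q 1 = (\<Sum>d\<in>{d. d dvd q}. 1)"
    unfolding divisor_choose_sum_def using assms by (intro sum.cong refl) (auto dest: dvd_pos_nat)
  then show ?thesis using assms by (simp add: divisor_sigma_0_eq_card)
qed

lemma divisor_choose_sum_2_le:
  assumes "q > 0"
  shows "divisor_choose_sum q 2 \<le> divisor_sigma 1 q / 2"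
proof -
  have "real (d choose 2) / real d \<le> real d / 2" if "d > 0" for d
  proof -
    have "2 * (d choose 2) = d * (d - 1)"
      using binomial_absorption[of 1 d] by (simp add: numeral_2_eq_2)
    then have "2 * real (d choose 2) \<le> real d * real d"
      by (metis mult_le_mono2 diff_le_self of_nat_le_iff of_nat_mult of_nat_numeral)
    then show ?thesis using that by (simp add: field_simps)
  qed
  then have "divisor_choose_sum q 2 \<le> (\<Sum>d\<in>{d. d dvd q}. real d / 2)"
    unfolding divisor_choose_sum_def using assms by (intro sum_mono) (auto dest: dvd_pos_nat)
  then show ?thesis by (simp add: divisor_sigma_1_eq_sum sum_divide_distrib)
qed

lemma divisor_choose_sum_le:
  assumes "q > 0" "t \<ge> 3"
  shows "divisor_choose_sum q t \<le> 2 * (real q)^(t - 1) / fact t"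
proof -
  have "real (d choose t) / real d \<le> (real d)^(t - 1) / fact t" if "d > 0" for d
  proof -
    have "real (d choose t) * fact t \<le> (real d)^t"
      using binomial_fact_pow[of d t] by (metis of_nat_fact of_nat_le_iff of_nat_mult of_nat_power)
    moreover have "(real d)^t = real d * (real d)^(t - 1)" using assms(2) by (simp flip: power_Suc)
    ultimately show ?thesis using that by (simp add: field_simps)
  qed
  then have "divisor_choose_sum q t \<le> (\<Sum>d\<in>{d. d dvd q}. (real d)^(t - 1)) / fact t"
    unfolding divisor_choose_sum_def sum_divide_distrib using assms(1)
    by (intro sum_mono) (auto dest: dvd_pos_nat)
  also have "\<dots> \<le> 2 * (real q)^(t - 1) / fact t"
    using sum_divisors_power_le[OF assms(1), of "t - 1"] assms(2) by (simp add: divide_right_mono)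
  finally show ?thesis .
qed


lemma sum_inverse_le: "(\<Sum>m=1..k. 1 / real m) \<le> (real k + 1) / 2"
proof (induction k)
  case (Suc k)
  show ?case
  proof (cases "k = 0")
    case False
    then have "1 / real (Suc k) \<le> 1 / 2" by (simp add: field_simps)
    then have "(\<Sum>m=1..k. 1 / real m) + 1 / real (Suc k) \<le> (real k + 1) / 2 + 1 / 2"
      using Suc.IH by (rule add_mono[rotated])
    then show ?thesis by (simp add: field_simps)
  qed simp
qed simp

text \<open>A length \<open>L\<close> with nonzero weight is \<open>d * m\<close> with \<open>d = gcd L q\<close> a divisor of \<open>q\<close> and
  \<open>m = L div d \<le> k\<close>; this pairing is injective.\<close>

lemma cycle_weight_sum_le:
  assumes "q > 0" "t \<ge> 1"
  shows "cycle_weight_sum q k t \<le> (\<Sum>m=1..k. 1 / real m) * divisor_choose_sum q t"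
proof -
  define A where "A = {L \<in> {1..k * q}. cycle_weight q k L \<noteq> 0}"
  define \<phi> where "\<phi> L = (gcd L q, L div gcd L q)" for L
  define f where "f x = real (fst x choose t) / (real (fst x) * real (snd x))" for x :: "nat \<times> nat"
  have "cycle_weight_sum q k t = (\<Sum>L\<in>A. real (cycle_weight q k L choose t) / real L)"
    unfolding cycle_weight_sum_def A_def by (rule sum.mono_neutral_right) (use assms(2) in auto)
  also have "\<dots> = (\<Sum>L\<in>A. f (\<phi> L))"
  proof (rule sum.cong[OF refl])
    fix L assume "L \<in> A"
    then have "cycle_weight q k L = gcd L q" by (auto simp: A_def cycle_weight_def split: if_splits)
    moreover have "real (gcd L q) * real (L div gcd L q) = real L"
      by (metis dvd_mult_div_cancel gcd_dvd1 of_nat_mult)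
    ultimately show "real (cycle_weight q k L choose t) / real L = f (\<phi> L)" by (simp add: f_def \<phi>_def)
  qed
  also have "\<dots> = (\<Sum>x\<in>\<phi> ` A. f x)"
    by (rule sum.reindex[symmetric, unfolded comp_def], rule inj_onI)
       (metis \<phi>_def dvd_mult_div_cancel gcd_dvd1 prod.inject)
  also have "\<dots> \<le> (\<Sum>x\<in>{d. d dvd q} \<times> {1..k}. f x)"
  proof (rule sum_mono2)
    show "\<phi> ` A \<subseteq> {d. d dvd q} \<times> {1..k}"
    proof
      fix x assume "x \<in> \<phi> ` A"
      then obtain L where "L \<in> A" "x = \<phi> L" by blast
      then obtain m where m: "L \<ge> 1" "m \<in> {1..k}" "L dvd q * m"
        by (auto simp: A_def cycle_weight_def split: if_splits)
      then have "L div gcd L q dvd m" by (intro div_gcd_dvd_of_dvd_mult) auto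
      then have "L div gcd L q \<le> m" using m(2) by (intro dvd_imp_le) auto
      moreover have "L div gcd L q \<ge> 1"
        using m(1) by (simp add: Suc_le_eq div_greater_zero_iff gcd_le1_nat)
      ultimately show "x \<in> {d. d dvd q} \<times> {1..k}" using m(2) \<open>x = \<phi> L\<close> by (simp add: \<phi>_def)
    qed
  qed (auto simp: f_def assms(1))
  also have "\<dots> = (\<Sum>d\<in>{d. d dvd q}. \<Sum>m=1..k. real (d choose t) / real d * (1 / real m))"
    by (simp add: sum.cartesian_product f_def split_def)
  also have "\<dots> = divisor_choose_sum q t * (\<Sum>m=1..k. 1 / real m)"
    by (simp only: divisor_choose_sum_def sum_product)
  finally show ?thesis by (simp add: mult.commute)
qed


lemma sum_if_eq_le:
  fixes X :: "'a::ordered_comm_monoid_add"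
  assumes "finite A" "X \<ge> 0"
  shows "(\<Sum>i\<in>A. if i = c then X else 0) \<le> X"
  using assms by (simp add: sum.delta)

lemma power_div_fact_mult:
  fixes x :: "'a::field_char_0"
  assumes "k \<le> n"
  shows "x^k / fact k * (x^(n - k) / fact (n - k)) = x^n / fact n * of_nat (n choose k)"
  using assms by (simp add: binomial_fact power_add[symmetric] field_simps)

definition moment_majorant :: "real \<Rightarrow> real \<Rightarrow> real \<Rightarrow> real \<Rightarrow> nat \<Rightarrow> real" where
  "moment_majorant H Q s s1 m =
     (if m = 0 then 1 else if m = 1 then H * s else if m = 2 then (H\<^sup>2 * s\<^sup>2 + H * s1) / 2
      else 200 * H^3 * Q^(m - 1) / fact m)"

text \<open>The majorant in units of \<open>Q^m / m!\<close> (see \<open>moment_majorant_le_profile\<close>). In these units the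
  recursion becomes a binomial convolution, and only the first two and last three terms of it
  need care.\<close>

definition moment_profile :: "real \<Rightarrow> real \<Rightarrow> real \<Rightarrow> nat \<Rightarrow> real" where
  "moment_profile H Q s m =
     (if m = 0 then 1 else if m = 1 then H * s / Q else if m = 2 then (4 * H\<^sup>2 + H * s) / Q
      else 200 * H^3 / Q)"

locale divisor_parameters =
  fixes H Q s s1 :: real
  assumes H: "H \<ge> 3/2" and Q: "Q \<ge> 1" and s: "s \<ge> 1" "s\<^sup>2 \<le> 4 * Q" and s1: "0 \<le> s1" "s1 \<le> Q * s"
begin

lemma moment_majorant_nonneg: "moment_majorant H Q s s1 m \<ge> 0"
  using H Q s s1 by (simp add: moment_majorant_def)

lemma moment_profile_nonneg: "moment_profile H Q s m \<ge> 0"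
  using H Q s by (simp add: moment_profile_def)

lemma moment_majorant_le_profile:
  "moment_majorant H Q s s1 m \<le> Q^m / fact m * moment_profile H Q s m"
proof -
  consider "m = 0" | "m = 1" | "m = 2" | "m \<ge> 3" by linarith
  then show ?thesis
  proof cases
    case 3
    have "H\<^sup>2 * s\<^sup>2 + H * s1 \<le> H\<^sup>2 * (4 * Q) + H * (Q * s)"
      using H s s1 by (intro add_mono mult_left_mono) auto
    also have "\<dots> = Q\<^sup>2 * ((4 * H\<^sup>2 + H * s) / Q)"
      using Q by (simp add: power2_eq_square field_simps)
    finally show ?thesis using 3 by (simp add: moment_majorant_def moment_profile_def)
  next
    case 4
    then have "Q^m = Q * Q^(m - 1)" by (simp flip: power_Suc)
    then show ?thesis using 4 Q by (simp add: moment_majorant_def moment_profile_def mult_ac)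
  qed (use Q in \<open>simp_all add: moment_majorant_def moment_profile_def\<close>)
qed


lemma moment_profile_tail_le:
  assumes "r \<ge> 3"
  shows "(\<Sum>i=3..r. real ((r - 1) choose (i - 1)) * moment_profile H Q s (r - i))
    \<le> 1 + real (r - 1) * moment_profile H Q s 1 + real ((r - 1) choose 2) * moment_profile H Q s 2
      + 2^(r - 1) * (200 * H^3 / Q)"
proof -
  let ?u = "moment_profile H Q s" and ?Y = "200 * H^3 / Q" and ?b = "\<lambda>i. real ((r - 1) choose (i - 1))"
  have "?b i * ?u (r - i) \<le> (if i = r then 1 else 0) + (if i = r - 1 then real (r - 1) * ?u 1 else 0)
      + (if i = r - 2 then real ((r - 1) choose 2) * ?u 2 else 0) + ?b i * ?Y" if i: "i \<in> {3..r}" for i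
  proof -
    have nonneg: "?u 1 \<ge> 0" "?u 2 \<ge> 0" "?b i * ?Y \<ge> 0" using moment_profile_nonneg H Q by auto
    consider "i = r" | "i = r - 1" | "i = r - 2" | "r - i \<ge> 3" using i by fastforce
    then show ?thesis
    proof cases
      case 2
      then have "?b i = real (r - 1)" using binomial_symmetric[of 1 "r - 1"] assms by simp
      then show ?thesis using 2 assms nonneg by simp
    next
      case 3
      then have "?b i = real ((r - 1) choose 2)"
        using binomial_symmetric[of 2 "r - 1"] assms by (simp add: numeral_3_eq_3)
      then show ?thesis using 3 assms nonneg by simp
    qed (use nonneg assms in \<open>auto simp: moment_profile_def\<close>)
  qed
  then have "(\<Sum>i=3..r. ?b i * ?u (r - i)) \<le> (\<Sum>i=3..r. (if i = r then 1 else 0)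
      + (if i = r - 1 then real (r - 1) * ?u 1 else 0)
      + (if i = r - 2 then real ((r - 1) choose 2) * ?u 2 else 0) + ?b i * ?Y)"
    by (rule sum_mono)
  also have "\<dots> = (\<Sum>i=3..r. if i = r then 1 else 0) + (\<Sum>i=3..r. if i = r - 1 then real (r - 1) * ?u 1 else 0)
      + (\<Sum>i=3..r. if i = r - 2 then real ((r - 1) choose 2) * ?u 2 else 0) + (\<Sum>i=3..r. ?b i) * ?Y"
    by (simp only: sum.distrib sum_distrib_right)
  also have "\<dots> \<le> 1 + real (r - 1) * ?u 1 + real ((r - 1) choose 2) * ?u 2 + (\<Sum>i=3..r. ?b i) * ?Y"
    using moment_profile_nonneg by (intro add_mono sum_if_eq_le order_refl) auto
  also have "(\<Sum>i=3..r. ?b i) * ?Y \<le> 2^(r - 1) * ?Y"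
  proof -
    have "(\<Sum>i=3..r. ?b i) = (\<Sum>k=2..r - 1. real ((r - 1) choose k))"
      using assms sum.shift_bounds_cl_nat_ivl[of "\<lambda>i. ?b i" 2 1 "r - 1"] by simp
    also have "\<dots> \<le> (\<Sum>k\<le>r - 1. real ((r - 1) choose k))" by (intro sum_mono2) auto
    also have "\<dots> = 2^(r - 1)" by (simp flip: of_nat_sum add: choose_row_sum)
    finally show ?thesis using H Q by (intro mult_right_mono) auto
  qed
  finally show ?thesis by simp
qed


lemma moment_profile_head_le:
  assumes r: "r \<ge> 3" and small: "H * s * (real r)\<^sup>2 \<le> Q / 20"
  shows "H * s * moment_profile H Q s (r - 1) + real (r - 1) * (H * s) * moment_profile H Q s (r - 2)
    \<le> 200 * H^3 / 45 + 33 * H\<^sup>2"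
proof -
  let ?u = "moment_profile H Q s" and ?Y = "200 * H^3"
  have Hs: "H * s \<ge> 0" using H s by simp
  have "(3::real)\<^sup>2 \<le> (real r)\<^sup>2" using r by (intro power_mono) auto
  then have "H * s * 9 \<le> H * s * (real r)\<^sup>2" using Hs by (intro mult_left_mono) auto
  then have Hs_Q: "H * s / Q \<le> 1 / 180" using small Q by (simp add: field_simps)
  have "real r * 3 \<le> real r * real r" using r by (intro mult_left_mono) auto
  then have "real r * (H * s) * 3 \<le> H * s * (real r)\<^sup>2"
    using Hs mult_left_mono by (fastforce simp: power2_eq_square mult_ac)
  then have rHs_Q: "real r * (H * s) / Q \<le> 1 / 60" using small Q by (simp add: field_simps)
  consider "r \<ge> 5" | "r \<le> 4" by linarith
  then show ?thesis
  proof cases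
    case 1
    then have "r - 1 \<notin> {0, 1, 2}" "r - 2 \<notin> {0, 1, 2}" by auto
    then have u: "?u (r - 1) = ?Y / Q" "?u (r - 2) = ?Y / Q" unfolding moment_profile_def by auto
    have "H * s * ?u (r - 1) + real (r - 1) * (H * s) * ?u (r - 2) = real r * (H * s) / Q * ?Y"
      unfolding u using r Q by (simp add: of_nat_diff field_simps)
    also have "\<dots> \<le> 1 / 60 * ?Y" using rHs_Q H by (intro mult_right_mono) auto
    finally show ?thesis using H zero_le_power2[of H] zero_le_power[of H 3] by linarith
  next
    case 2
    define U where "U = ?u 1 + ?u 2 + ?Y / Q"
    have U: "?u k \<le> U" if "k \<ge> 1" for k
      using that moment_profile_nonneg[of 1] moment_profile_nonneg[of 2] H Q
      by (auto simp: U_def moment_profile_def)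
    have "H * s * ?u (r - 1) + real (r - 1) * (H * s) * ?u (r - 2) \<le> H * s * U + real (r - 1) * (H * s) * U"
      using r Hs U by (intro add_mono mult_left_mono) auto
    also have "\<dots> = real r * (H * s * U)" using r by (simp add: of_nat_diff algebra_simps)
    also have "\<dots> \<le> 4 * (H * s * U)"
      using 2 Hs U[of 1] moment_profile_nonneg[of 1] by (intro mult_right_mono) auto
    also have "\<dots> = 8 * (H\<^sup>2 * s\<^sup>2 / Q) + 16 * H\<^sup>2 * (H * s / Q) + 4 * (H * s / Q) * ?Y"
      using Q by (simp add: U_def moment_profile_def power2_eq_square field_simps)
    also have "\<dots> \<le> 8 * (4 * H\<^sup>2) + 16 * H\<^sup>2 * (1 / 180) + 4 * (1 / 180) * ?Y"
      using s Hs_Q H Q by (intro add_mono mult_left_mono mult_right_mono) (auto simp: field_simps)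
    finally show ?thesis using zero_le_power2[of H] by linarith
  qed
qed


lemma moment_profile_convolution_le:
  assumes r: "r \<ge> 3" and large: "H * 2^r \<le> 3/4 * Q" and small: "H * s * (real r)\<^sup>2 \<le> Q / 20"
  shows "(\<Sum>i=1..r. real ((r - 1) choose (i - 1))
           * ((if i \<le> 2 then H * s else 2 * H) * moment_profile H Q s (r - i))) \<le> 200 * H^3"
proof -
  let ?u = "moment_profile H Q s" and ?Y = "200 * H^3" and ?b = "\<lambda>i. real ((r - 1) choose (i - 1))"
  define T where "T = (\<Sum>i=3..r. ?b i * ?u (r - i))"
  define f where "f i = ?b i * ((if i \<le> 2 then H * s else 2 * H) * ?u (r - i))" for i
  have "(\<Sum>i=1..r. f i) = f 1 + f 2 + (\<Sum>i=3..r. f i)"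
    using sum.atLeast_Suc_atMost[of 1 r f] sum.atLeast_Suc_atMost[of 2 r f] r
    by (simp add: numeral_3_eq_3 numeral_2_eq_2)
  moreover have "(\<Sum>i=3..r. f i) = 2 * H * T"
    unfolding T_def sum_distrib_left f_def by (intro sum.cong refl) auto
  ultimately have "(\<Sum>i=1..r. f i) = H * s * ?u (r - 1) + real (r - 1) * (H * s) * ?u (r - 2) + 2 * H * T"
    using r by (simp add: f_def)
  then have "(\<Sum>i=1..r. ?b i * ((if i \<le> 2 then H * s else 2 * H) * ?u (r - i)))
      = H * s * ?u (r - 1) + real (r - 1) * (H * s) * ?u (r - 2) + 2 * H * T"
    by (simp add: f_def)
  also have "H * s * ?u (r - 1) + real (r - 1) * (H * s) * ?u (r - 2) \<le> ?Y / 45 + 33 * H\<^sup>2"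
    by (rule moment_profile_head_le[OF r small])
  also have "2 * H * T \<le> 25/12 * H + H\<^sup>2 / 5 + H * 2^r / Q * ?Y"
  proof -
    have Hs: "H * s \<ge> 0" using H s by simp
    have "real r * 3 \<le> (real r)\<^sup>2" using r by (simp add: power2_eq_square)
    then have "real r * 3 * (H * s) \<le> (real r)\<^sup>2 * (H * s)" using Hs by (rule mult_right_mono)
    moreover have "real (r - 1) * (H * s) \<le> real r * (H * s)" using Hs by (intro mult_right_mono) auto
    ultimately have "real (r - 1) * (H * s) \<le> Q / 60" using small by (simp add: mult_ac)
    then have u1: "real (r - 1) * ?u 1 \<le> 1 / 60" using Q by (simp add: moment_profile_def field_simps)
    have "(r - 1 choose 2) * fact 2 \<le> (r - 1)\<^sup>2" by (rule binomial_fact_pow)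
    then have "real ((r - 1) choose 2) * 2 \<le> (real (r - 1))\<^sup>2"
      by (simp flip: of_nat_mult of_nat_power)
    also have "\<dots> \<le> (real r)\<^sup>2" by (intro power_mono) auto
    finally have binom: "real ((r - 1) choose 2) \<le> (real r)\<^sup>2 / 2" by simp
    have "H * (real r)\<^sup>2 * 1 \<le> H * (real r)\<^sup>2 * s" using H s by (intro mult_left_mono) auto
    then have Hr: "H * (real r)\<^sup>2 / Q \<le> 1 / 20" using small Q by (simp add: field_simps)
    have "real ((r - 1) choose 2) * ?u 2 \<le> (real r)\<^sup>2 / 2 * ?u 2"
      using binom moment_profile_nonneg by (rule mult_right_mono)
    also have "\<dots> = 2 * H * (H * (real r)\<^sup>2 / Q) + H * s * (real r)\<^sup>2 / Q / 2"
      using Q by (simp add: moment_profile_def field_simps power2_eq_square)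
    also have "\<dots> \<le> 2 * H * (1 / 20) + 1 / 20 / 2"
      using Hr small H Q by (intro add_mono mult_left_mono divide_right_mono) (auto simp: field_simps)
    finally have u2: "real ((r - 1) choose 2) * ?u 2 \<le> H / 10 + 1 / 40" by simp
    have "T \<le> 1 + 1/60 + (H / 10 + 1 / 40) + 2^(r - 1) * (?Y / Q)"
      using moment_profile_tail_le[OF r] u1 u2 unfolding T_def by linarith
    then have "2 * H * T \<le> 2 * H * (1 + 1/60 + (H / 10 + 1 / 40) + 2^(r - 1) * (?Y / Q))"
      using H by (intro mult_left_mono) auto
    also have "(2::real)^r = 2^(r - 1) * 2" using power_minus_mult[of r "2::real"] r by simp
    then have "2 * H * (1 + 1/60 + (H / 10 + 1 / 40) + 2^(r - 1) * (?Y / Q))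
        = 25/12 * H + H\<^sup>2 / 5 + H * 2^r / Q * ?Y"
      by (simp add: field_simps power2_eq_square)
    finally show ?thesis .
  qed
  also have "H * 2^r / Q * ?Y \<le> 3/4 * ?Y" using large Q H by (intro mult_right_mono) (auto simp: field_simps)
  finally have bound: "(\<Sum>i=1..r. ?b i * ((if i \<le> 2 then H * s else 2 * H) * ?u (r - i)))
      \<le> ?Y / 45 + 33 * H\<^sup>2 + (25/12 * H + H\<^sup>2 / 5 + 3/4 * ?Y)" by simp
  have "3/2 * H\<^sup>2 \<le> H * H\<^sup>2" "3/2 * H \<le> H * H" using H by (intro mult_right_mono; simp)+
  then have "H\<^sup>2 \<le> 2/3 * H^3" "H \<le> 4/9 * H^3" by (simp_all add: power2_eq_square power3_eq_cube)
  moreover have "H^3 \<ge> 0" using H by simp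
  ultimately have "?Y / 45 + 33 * H\<^sup>2 + (25/12 * H + H\<^sup>2 / 5 + 3/4 * ?Y) \<le> ?Y" by linarith
  with bound show ?thesis by (rule order_trans)
qed


lemma moment_majorant_recursion:
  fixes p :: "nat \<Rightarrow> real"
  assumes p: "\<And>i. p i \<ge> 0" "p 1 \<le> H * s" "p 2 \<le> H * s1 / 2"
      "\<And>i. i \<ge> 3 \<Longrightarrow> p i \<le> 2 * H * Q^(i - 1) / fact i"
    and r: "r \<ge> 1" and large: "r \<ge> 3 \<Longrightarrow> H * 2^r \<le> 3/4 * Q"
    and small: "r \<ge> 3 \<Longrightarrow> H * s * (real r)\<^sup>2 \<le> Q / 20"
  shows "(\<Sum>i=1..r. real i * p i * moment_majorant H Q s s1 (r - i)) \<le> real r * moment_majorant H Q s s1 r"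
proof -
  let ?B = "moment_majorant H Q s s1" and ?u = "moment_profile H Q s"
  consider "r = 1" | "r = 2" | "r \<ge> 3" using r by linarith
  then show ?thesis
  proof cases
    case 1
    then show ?thesis using p(2) by (simp add: moment_majorant_def)
  next
    case 2
    have "(\<Sum>i=1..r. real i * p i * ?B (r - i)) = p 1 * (H * s) + 2 * p 2"
      using 2 by (simp add: moment_majorant_def numeral_2_eq_2)
    also have "\<dots> \<le> (H * s) * (H * s) + 2 * (H * s1 / 2)"
      using p H s by (intro add_mono mult_right_mono) auto
    also have "\<dots> = real r * ?B r" using 2 by (simp add: moment_majorant_def power2_eq_square)
    finally show ?thesis .
  next
    case 3
    define a where "a i = (if i \<le> 2 then H * s else 2 * H)" for i :: nat
    define K where "K = Q^(r - 1) / fact (r - 1)"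
    have ip: "real i * p i \<le> Q^(i - 1) / fact (i - 1) * a i" if i: "i \<ge> 1" for i
    proof -
      consider "i = 1" | "i = 2" | "i \<ge> 3" using i by linarith
      then show ?thesis
      proof cases
        case 2
        have "H * s1 \<le> H * (Q * s)" using s1 H by (intro mult_left_mono) auto
        then show ?thesis using 2 p(3) by (simp add: a_def mult_ac)
      next
        case 3
        then have "real i * p i \<le> real i * (2 * H * Q^(i - 1) / fact i)"
          using p(4) by (intro mult_left_mono) auto
        also have "\<dots> = Q^(i - 1) / fact (i - 1) * a i"
          using 3 by (simp add: a_def fact_reduce[of i] field_simps)
        finally show ?thesis .
      qed (use p(2) in \<open>simp add: a_def\<close>)
    qed
    have "real i * p i * ?B (r - i) \<le> K * (real ((r - 1) choose (i - 1)) * (a i * ?u (r - i)))"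
      if "i \<in> {1..r}" for i
    proof -
      have "real i * p i * ?B (r - i) \<le> (Q^(i - 1) / fact (i - 1) * a i) * (Q^(r - i) / fact (r - i) * ?u (r - i))"
        using that moment_majorant_nonneg Q H s
        by (intro mult_mono[OF ip moment_majorant_le_profile]) (auto simp: a_def)
      also have "\<dots> = (Q^(i - 1) / fact (i - 1) * (Q^(r - 1 - (i - 1)) / fact (r - 1 - (i - 1)))) * (a i * ?u (r - i))"
        using that by (simp add: mult_ac)
      also have "Q^(i - 1) / fact (i - 1) * (Q^(r - 1 - (i - 1)) / fact (r - 1 - (i - 1)))
          = K * real ((r - 1) choose (i - 1))"
        unfolding K_def using that by (intro power_div_fact_mult) auto
      finally show ?thesis by (simp only: mult.assoc)
    qed
    then have "(\<Sum>i=1..r. real i * p i * ?B (r - i)) \<le> K * (\<Sum>i=1..r. real ((r - 1) choose (i - 1)) * (a i * ?u (r - i)))"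
      unfolding sum_distrib_left by (rule sum_mono)
    also have "\<dots> \<le> K * (200 * H^3)"
      using moment_profile_convolution_le[OF 3 large[OF 3] small[OF 3]] Q
      by (intro mult_left_mono) (auto simp: a_def K_def)
    also have "\<dots> = real r * ?B r"
      using 3 fact_reduce[of r, where 'a = real] by (simp add: moment_majorant_def K_def field_simps)
    finally show ?thesis .
  qed
qed

end


lemma divisor_parameters_divisor_sigma:
  assumes "H \<ge> 3/2" "q > 0"
  shows "divisor_parameters H q (divisor_sigma 0 q) (divisor_sigma 1 q)"
proof
  show "0 \<le> divisor_sigma 1 q"
    using assms(2) divisor_sigma_0_ge_1 divisor_sigma_0_le_1 by (meson order_trans zero_le_one)
  show "divisor_sigma 1 q \<le> real q * divisor_sigma 0 q" using assms(2) by (rule divisor_sigma_1_le)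
qed (use assms divisor_sigma_0_ge_1 divisor_sigma_0_squared_le in auto)

lemma sum_choose_short_cycles_le_majorant:
  fixes S :: "'a set"
  assumes q: "q > 0" and k: "k \<ge> 2" and S: "finite S"
    and large: "\<And>r. 3 \<le> r \<Longrightarrow> r \<le> R \<Longrightarrow> (real k + 1) / 2 * 2^r \<le> 3/4 * real q"
    and small: "\<And>r. 3 \<le> r \<Longrightarrow> r \<le> R \<Longrightarrow>
      (real k + 1) / 2 * divisor_sigma 0 q * (real r)\<^sup>2 \<le> real q / 20"
  shows "(\<Sum>\<pi>\<in>{\<pi>. \<pi> permutes S}. real (card (short_cycles q k S \<pi>) choose R))
    \<le> fact (card S) * moment_majorant ((real k + 1) / 2) q (divisor_sigma 0 q) (divisor_sigma 1 q) R"
proof -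
  define H where "H = (real k + 1) / 2"
  interpret divisor_parameters H q "divisor_sigma 0 q" "divisor_sigma 1 q"
    using k by (intro divisor_parameters_divisor_sigma q) (simp add: H_def)
  have weight: "cycle_weight_sum q k i \<le> H * divisor_choose_sum q i" if "i \<ge> 1" for i
  proof -
    have "divisor_choose_sum q i \<ge> 0" by (simp add: divisor_choose_sum_def sum_nonneg)
    then show ?thesis
      using cycle_weight_sum_le[OF q that] sum_inverse_le[of k] unfolding H_def
      by (meson mult_right_mono order_trans)
  qed
  show ?thesis unfolding H_def[symmetric]
  proof (rule sum_choose_short_cycles_le[OF _ _ moment_majorant_nonneg _ order_refl S])
    fix r assume r: "1 \<le> r" "r \<le> R"
    show "(\<Sum>i=1..r. real i * cycle_weight_sum q k i * moment_majorant H q (divisor_sigma 0 q) (divisor_sigma 1 q) (r - i))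
        \<le> real r * moment_majorant H q (divisor_sigma 0 q) (divisor_sigma 1 q) r"
    proof (rule moment_majorant_recursion[OF _ _ _ _ r(1)])
      show "cycle_weight_sum q k i \<ge> 0" for i by (simp add: cycle_weight_sum_def sum_nonneg)
      show "cycle_weight_sum q k 1 \<le> H * divisor_sigma 0 q"
        using weight[of 1] divisor_choose_sum_1[OF q] by simp
      have "H * divisor_choose_sum q 2 \<le> H * (divisor_sigma 1 q / 2)"
        using divisor_choose_sum_2_le[OF q] H by (intro mult_left_mono) auto
      then show "cycle_weight_sum q k 2 \<le> H * divisor_sigma 1 q / 2" using weight[of 2] by simp
      show "cycle_weight_sum q k i \<le> 2 * H * real q^(i - 1) / fact i" if i: "i \<ge> 3" for i
      proof -
        have "H * divisor_choose_sum q i \<le> H * (2 * real q^(i - 1) / fact i)"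
          using divisor_choose_sum_le[OF q i] H by (intro mult_left_mono) auto
        then show ?thesis using weight[of i] i by (simp add: mult_ac)
      qed
    qed (use large small r in \<open>auto simp: H_def\<close>)
  qed (use q in \<open>auto simp: moment_majorant_def\<close>)
qed


lemma sum_cyc_count_eq_card_short_cycles:
  assumes "\<pi> permutes {1..n}"
  shows "(\<Sum>i=1..k. cyc_count n (\<pi> ^^ q) i) = card (short_cycles q k {1..n} \<pi>)"
proof -
  define \<sigma> where "\<sigma> = \<pi> ^^ q"
  have \<sigma>: "permutation \<sigma>"
    unfolding \<sigma>_def using assms permutation_permutes by (blast intro: permutation_funpow)
  define A where "A i = {orbit \<sigma> x | x. x \<in> {1..n} \<and> card (orbit \<sigma> x) = i}" for i
  have "finite (A i)" for i
    by (rule finite_subset[of _ "orbit \<sigma> ` {1..n}"]) (auto simp: A_def)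
  then have "(\<Sum>i=1..k. cyc_count n (\<pi> ^^ q) i) = card (\<Union>i\<in>{1..k}. A i)"
    by (subst card_UN_disjoint) (auto simp: cyc_count_def A_def \<sigma>_def)
  also have "(\<Union>i\<in>{1..k}. A i) = short_cycles q k {1..n} \<pi>"
  proof (intro set_eqI iffI)
    fix y assume "y \<in> short_cycles q k {1..n} \<pi>"
    then obtain x where x: "x \<in> {1..n}" "y = orbit \<sigma> x" "card y \<le> k"
      by (auto simp: short_cycles_def \<sigma>_def)
    moreover have "card y \<ge> 1"
      using x(2) finite_orbit[OF permutation_self_in_orbit[OF \<sigma>]] permutation_self_in_orbit[OF \<sigma>, of x]
      by (metis One_nat_def Suc_leI card_gt_0_iff empty_iff)
    ultimately show "y \<in> (\<Union>i\<in>{1..k}. A i)" by (auto simp: A_def)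
  qed (auto simp: A_def short_cycles_def \<sigma>_def)
  finally show ?thesis .
qed

lemma mult_le_if_squares_le:
  fixes a s Q :: real
  assumes "0 \<le> a" "0 \<le> s" "s\<^sup>2 \<le> 4 * Q" "4 * a\<^sup>2 \<le> Q"
  shows "a * s \<le> Q"
proof -
  have "Q \<ge> 0" using assms(4) zero_le_power2[of a] by linarith
  have "(a * s)\<^sup>2 \<le> a\<^sup>2 * (4 * Q)" by (simp add: power_mult_distrib assms(3) mult_left_mono)
  also have "\<dots> = (4 * a\<^sup>2) * Q" by simp
  also have "\<dots> \<le> Q * Q" using assms(4) \<open>Q \<ge> 0\<close> by (rule mult_right_mono)
  finally have "(a * s)\<^sup>2 \<le> Q\<^sup>2" by (simp add: power2_eq_square)
  then show ?thesis using \<open>Q \<ge> 0\<close> by (rule power2_le_imp_le)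
qed

lemma fact_le_fact_mult_power:
  assumes "m \<le> n"
  shows "(fact n :: real) \<le> fact m * (real n)^(n - m)"
proof -
  have "(fact (m + d) :: real) \<le> fact m * (real (m + d))^d" for d
  proof (induction d)
    case (Suc d)
    have "(fact (m + Suc d) :: real) \<le> real (m + Suc d) * (fact m * (real (m + d))^d)"
      using Suc by (simp add: mult_left_mono)
    also have "\<dots> \<le> real (m + Suc d) * (fact m * (real (m + Suc d))^d)"
      by (intro mult_left_mono power_mono) auto
    finally show ?case by (simp add: mult_ac)
  qed simp
  from this[of "n - m"] show ?thesis using assms by simp
qed

lemma poly_le_two_power:
  fixes c :: real
  shows "\<exists>N. \<forall>n\<ge>N. c * (real n + 2)^k \<le> 2^n"
proof (intro exI allI impI)
  define N where "N = nat \<lceil>\<bar>c\<bar> * 2^k * (real k + 1)^(k + 1)\<rceil> + k + 2"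
  fix n assume n: "n \<ge> N"
  then have n2: "real n \<ge> 2" and nk: "k + 1 \<le> n" by (auto simp: N_def)
  have big: "\<bar>c\<bar> * 2^k * (real k + 1)^(k + 1) \<le> real n"
    using n by (auto simp: N_def) linarith
  have "c * (real n + 2)^k \<le> \<bar>c\<bar> * (2 * real n)^k"
    using n2 by (intro mult_mono power_mono abs_ge_self) auto
  also have "\<dots> = \<bar>c\<bar> * 2^k * (real k + 1)^(k + 1) * (real n)^k / (real k + 1)^(k + 1)"
    by (simp add: power_mult_distrib)
  also have "\<dots> \<le> real n * (real n)^k / (real k + 1)^(k + 1)"
    using big by (intro divide_right_mono mult_right_mono) auto
  also have "\<dots> = (real n / real (k + 1))^(k + 1)" by (simp add: power_divide add.commute)
  also have "\<dots> \<le> real (n choose (k + 1))" by (rule binomial_ge_n_over_k_pow_k[OF nk])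
  also have "\<dots> \<le> 2^n" by (metis binomial_le_pow2 of_nat_le_iff of_nat_numeral of_nat_power)
  finally show "c * (real n + 2)^k \<le> 2^n" .
qed


lemma large_modulus_bounds:
  fixes D H Q :: real
  assumes D: "0 \<le> D" and H: "0 \<le> H" "2 * H \<le> D + 2" and Q: "400 * (D + 2)^6 \<le> Q"
  shows "D \<le> Q" "D\<^sup>2 \<le> Q" "4 * (2 * D\<^sup>2 * H)\<^sup>2 \<le> Q" "D\<^sup>2 * (200 * H^3 + 4 * H\<^sup>2) \<le> Q / 2"
    "4 * (20 * H * D\<^sup>2)\<^sup>2 \<le> Q"
proof -
  define E where "E = D + 2"
  define h where "h = 2 * H"
  have E: "1 \<le> E" "D \<le> E" "h \<le> E" "0 \<le> h" using D H by (auto simp: E_def h_def)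
  have E6: "E^a \<le> E^6" if "a \<le> 6" for a using power_increasing[OF that E(1)] .
  have DE: "D^a \<le> E^a" for a using D E by (intro power_mono) auto
  have hE: "h^a \<le> E^a" for a using E by (intro power_mono) auto
  have Q': "400 * E^6 \<le> Q" "0 \<le> E^6" using Q E(1) by (simp_all add: E_def)
  have prod: "D^a * h^b \<le> E^(a + b)" for a b
    using mult_mono[OF DE hE] E D by (simp add: power_add)
  show "D \<le> Q" using E E6[of 1] Q' by simp
  show "D\<^sup>2 \<le> Q" using DE[of 2] E6[of 2] Q' by linarith
  have "4 * (2 * D\<^sup>2 * H)\<^sup>2 = 4 * (D^4 * h\<^sup>2)" by (simp add: h_def power_mult_distrib flip: power_mult)
  then show "4 * (2 * D\<^sup>2 * H)\<^sup>2 \<le> Q" using prod[of 4 2, simplified] Q' by linarith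
  have "D\<^sup>2 * (200 * H^3 + 4 * H\<^sup>2) = 25 * (D\<^sup>2 * h^3) + D\<^sup>2 * h\<^sup>2"
    by (simp add: h_def power_mult_distrib algebra_simps)
  then show "D\<^sup>2 * (200 * H^3 + 4 * H\<^sup>2) \<le> Q / 2"
    using prod[of 2 3, simplified] prod[of 2 2, simplified] E6[of 5] E6[of 4] Q' by linarith
  have "4 * (20 * H * D\<^sup>2)\<^sup>2 = 400 * (D^4 * h\<^sup>2)" by (simp add: h_def power_mult_distrib flip: power_mult)
  then show "4 * (20 * H * D\<^sup>2)\<^sup>2 \<le> Q" using prod[of 4 2, simplified] Q' by linarith
qed

lemma (in divisor_parameters) moment_profile_le_inverse_square:
  assumes "m \<ge> 1" "D\<^sup>2 * (200 * H^3 + 4 * H\<^sup>2) \<le> Q / 2" "4 * (2 * D\<^sup>2 * H)\<^sup>2 \<le> Q"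
  shows "D\<^sup>2 * moment_profile H Q s m \<le> 1"
proof -
  let ?A = "200 * H^3 + 4 * H\<^sup>2 + H * s"
  have "2 * D\<^sup>2 * H * s \<le> Q" by (rule mult_le_if_squares_le) (use assms(3) H s in auto)
  moreover have "D\<^sup>2 * ?A = D\<^sup>2 * (200 * H^3 + 4 * H\<^sup>2) + D\<^sup>2 * H * s" by (simp add: algebra_simps)
  ultimately have A: "D\<^sup>2 * ?A \<le> Q" using assms(2) by linarith
  have "moment_profile H Q s m \<le> ?A / Q"
  proof -
    have "0 \<le> H * s" "0 \<le> H\<^sup>2" "0 \<le> H^3" using H s by auto
    then have bounds: "H * s \<le> ?A" "4 * H\<^sup>2 + H * s \<le> ?A" "200 * H^3 \<le> ?A" by linarith+
    obtain X where "moment_profile H Q s m = X / Q" "X \<le> ?A"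
    proof -
      consider "m = 1" | "m = 2" | "m \<ge> 3" using assms(1) by linarith
      then show thesis
      proof cases
        case 1
        show thesis by (rule that[of "H * s"]) (use 1 bounds in \<open>simp_all add: moment_profile_def\<close>)
      next
        case 2
        show thesis by (rule that[of "4 * H\<^sup>2 + H * s"]) (use 2 bounds in \<open>simp_all add: moment_profile_def\<close>)
      next
        case 3
        show thesis by (rule that[of "200 * H^3"]) (use 3 bounds in \<open>simp_all add: moment_profile_def\<close>)
      qed
    qed
    then show ?thesis using Q by (simp add: divide_right_mono)
  qed
  then have "D\<^sup>2 * moment_profile H Q s m \<le> D\<^sup>2 * (?A / Q)" by (rule mult_left_mono) simp
  also have "\<dots> \<le> 1" using A Q by simp
  finally show ?thesis .
qed


lemma (in divisor_parameters) moment_majorant_tail_le: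
  assumes D: "D \<ge> 4" "m + 2 \<le> D" and HD: "2 * H \<le> real D + 2" and QD: "400 * (real D + 2)^6 \<le> Q"
  shows "real D * moment_majorant H Q s s1 m \<le> Q^(D - 2) / fact (D - 1)"
proof -
  note bounds = large_modulus_bounds[of "real D" H Q, OF _ _ HD QD]
  have key: "(real D)^(D - m) * Q^m * moment_profile H Q s m \<le> Q^(D - 2)"
  proof (cases "m = 0")
    case True
    have "(real D)^D = ((real D)\<^sup>2)\<^sup>2 * (real D)^(D - 4)"
      using D by (simp flip: power_mult power_add)
    also have "\<dots> \<le> Q\<^sup>2 * Q^(D - 4)"
      using bounds H by (intro mult_mono power_mono) auto
    also have "\<dots> = Q^(2 + (D - 4))" by (simp only: power_add)
    also have "2 + (D - 4) = D - 2" using D by simp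
    finally show ?thesis using True by (simp add: moment_profile_def)
  next
    case False
    have "D - m = 2 + (D - m - 2)" using D by simp
    then have "(real D)^(D - m) = (real D)\<^sup>2 * (real D)^(D - m - 2)" by (metis power_add)
    then have "(real D)^(D - m) * Q^m * moment_profile H Q s m
        = ((real D)\<^sup>2 * moment_profile H Q s m) * (real D)^(D - m - 2) * Q^m"
      by (simp add: mult_ac)
    also have "\<dots> \<le> 1 * Q^(D - m - 2) * Q^m"
      using False bounds H moment_profile_nonneg Q
      by (intro mult_mono power_mono moment_profile_le_inverse_square) auto
    also have "\<dots> = Q^((D - m - 2) + m)" by (simp only: power_add mult_1_left)
    also have "(D - m - 2) + m = D - 2" using D by simp
    finally show ?thesis .
  qed
  have "fact D * moment_majorant H Q s s1 m
      \<le> (fact m * (real D)^(D - m)) * (Q^m / fact m * moment_profile H Q s m)"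
    using D moment_majorant_nonneg
    by (intro mult_mono fact_le_fact_mult_power moment_majorant_le_profile) auto
  also have "\<dots> = (real D)^(D - m) * Q^m * moment_profile H Q s m" by simp
  finally have "fact D * moment_majorant H Q s s1 m \<le> Q^(D - 2)" using key by linarith
  moreover have "(fact D :: real) = real D * fact (D - 1)" using D by (simp add: fact_reduce)
  ultimately show ?thesis by (simp add: field_simps)
qed


lemma two_power_ge_linear:
  assumes "j \<ge> 1"
  shows "2 * (real j + 2) \<le> 3 * 2^j"
  using assms
proof (induction j)
  case (Suc j)
  then show ?case by (cases "j = 0") auto
qed simp

lemma sum_choose_cyc_count_le:
  assumes q: "q > 0" and j: "1 \<le> j" "j \<le> \<Delta>"
    and log: "2^\<Delta> \<le> real q" and large: "400 * (real \<Delta> + 2)^6 \<le> real q"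
  shows "(\<Sum>\<pi>\<in>{\<pi>. \<pi> permutes {1..n}}. real ((\<Sum>i=1..j+1. cyc_count n (\<pi> ^^ q) i) choose (\<Delta> - j)))
    \<le> fact n * moment_majorant ((real j + 2) / 2) q (divisor_sigma 0 q) (divisor_sigma 1 q) (\<Delta> - j)"
proof -
  define H where "H = (real j + 2) / 2"
  have H: "0 \<le> H" "2 * H \<le> real \<Delta> + 2" using j by (auto simp: H_def)
  have "(\<Sum>\<pi>\<in>{\<pi>. \<pi> permutes {1..n}}. real ((\<Sum>i=1..j+1. cyc_count n (\<pi> ^^ q) i) choose (\<Delta> - j)))
      = (\<Sum>\<pi>\<in>{\<pi>. \<pi> permutes {1..n}}. real (card (short_cycles q (j + 1) {1..n} \<pi>) choose (\<Delta> - j)))"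
    by (intro sum.cong refl) (simp only: mem_Collect_eq sum_cyc_count_eq_card_short_cycles)
  also have "\<dots> \<le> fact (card {1..n}) * moment_majorant ((real (j + 1) + 1) / 2) q
      (divisor_sigma 0 q) (divisor_sigma 1 q) (\<Delta> - j)"
  proof (rule sum_choose_short_cycles_le_majorant[OF q])
    fix r assume r: "3 \<le> r" "r \<le> \<Delta> - j"
    have H_eq: "(real (j + 1) + 1) / 2 = H" by (simp add: H_def)
    have "H \<le> 3/4 * 2^j" using two_power_ge_linear[OF j(1)] by (simp add: H_def)
    moreover have "(2::real)^r \<le> 2^(\<Delta> - j)" using r(2) by (rule power_increasing) simp
    ultimately have "H * 2^r \<le> (3/4 * 2^j) * 2^(\<Delta> - j)" using H by (intro mult_mono) auto
    also have "\<dots> = 3/4 * 2^\<Delta>" using j by (simp flip: power_add)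
    finally show "(real (j + 1) + 1) / 2 * 2^r \<le> 3/4 * real q" unfolding H_eq using log by linarith
    have "20 * H * (real r)\<^sup>2 \<le> 20 * H * (real \<Delta>)\<^sup>2"
      using r H by (intro mult_left_mono power_mono) auto
    then have "20 * H * (real r)\<^sup>2 * divisor_sigma 0 q \<le> 20 * H * (real \<Delta>)\<^sup>2 * divisor_sigma 0 q"
      by (rule mult_right_mono) (use divisor_sigma_0_ge_1[OF q] in auto)
    also have "\<dots> \<le> real q"
      by (rule mult_le_if_squares_le)
        (use large_modulus_bounds(5)[OF _ H large] H divisor_sigma_0_ge_1[OF q]
          divisor_sigma_0_squared_le[OF q] in auto)
    finally show "(real (j + 1) + 1) / 2 * divisor_sigma 0 q * (real r)\<^sup>2 \<le> real q / 20"
      unfolding H_eq by (simp add: mult_ac)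
  qed (use j in auto)
  finally show ?thesis by (simp add: add.commute)
qed


lemma sum_moment_majorants_le:
  assumes q: "q > 0" and \<Delta>: "\<Delta> \<ge> 1" and large: "400 * (real \<Delta> + 2)^6 \<le> real q"
  shows "(\<Sum>j=1..\<Delta>. moment_majorant ((real j + 2) / 2) q (divisor_sigma 0 q) (divisor_sigma 1 q) (\<Delta> - j))
    \<le> (if \<Delta> = 1 then 1000
        else if \<Delta> = 2 then 1000 * divisor_sigma 0 q
        else if \<Delta> = 3 then 1000 * divisor_sigma 1 q
        else 1000 * (1 / fact (\<Delta> - 1)) * real q ^ (\<Delta> - 2))"
proof -
  define s where "s = divisor_sigma 0 q"
  define s1 where "s1 = divisor_sigma 1 q"
  define B where "B j = moment_majorant ((real j + 2) / 2) q s s1 (\<Delta> - j)" for j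
  have s: "1 \<le> s" "s\<^sup>2 \<le> 4 * real q" "s \<le> s1" "real q \<le> s1"
    using divisor_sigma_0_ge_1[OF q] divisor_sigma_0_squared_le[OF q] divisor_sigma_0_le_1[OF q]
      divisor_sigma_1_ge[OF q] by (simp_all add: s_def s1_def)
  consider "\<Delta> = 1" | "\<Delta> = 2" | "\<Delta> = 3" | "\<Delta> \<ge> 4" using \<Delta> by linarith
  then have "(\<Sum>j=1..\<Delta>. B j) \<le> (if \<Delta> = 1 then 1000 else if \<Delta> = 2 then 1000 * s
      else if \<Delta> = 3 then 1000 * s1 else 1000 * (1 / fact (\<Delta> - 1)) * real q ^ (\<Delta> - 2))"
  proof cases
    case 1
    then show ?thesis by (simp add: B_def moment_majorant_def)
  next
    case 2
    then have "(\<Sum>j=1..\<Delta>. B j) = 3/2 * s + 1" by (simp add: B_def moment_majorant_def numeral_2_eq_2)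
    then show ?thesis using 2 s by simp
  next
    case 3
    then have "(\<Sum>j=1..\<Delta>. B j) = 9/8 * s\<^sup>2 + 3/4 * s1 + 2 * s + 1"
      by (simp add: B_def moment_majorant_def numeral_3_eq_3 numeral_2_eq_2 power2_eq_square field_simps)
    then show ?thesis using 3 s by simp
  next
    case 4
    define T where "T = real q^(\<Delta> - 2) / fact (\<Delta> - 1)"
    have "\<Delta> - 1 \<notin> {0, 1, 2}" "\<Delta> - 1 - 1 = \<Delta> - 2" using 4 by auto
    then have B1: "B 1 = 675 * T" by (simp add: B_def T_def moment_majorant_def power3_eq_cube)
    have Bj: "B j \<le> T / real \<Delta>" if j: "j \<in> {2..\<Delta>}" for j
    proof -
      interpret divisor_parameters "(real j + 2) / 2" q s s1
        unfolding s_def s1_def using j by (intro divisor_parameters_divisor_sigma q) auto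
      have "real \<Delta> * B j \<le> T"
        unfolding B_def T_def using 4 j large by (intro moment_majorant_tail_le) auto
      then show ?thesis using 4 by (simp add: field_simps)
    qed
    have "(\<Sum>j=2..\<Delta>. B j) \<le> (\<Sum>j=2..\<Delta>. T / real \<Delta>)" using Bj by (rule sum_mono)
    also have "\<dots> = real (\<Delta> - 1) / real \<Delta> * T" by simp
    also have "\<dots> \<le> T" using 4 by (intro mult_left_le_one_le) (auto simp: T_def)
    finally have "(\<Sum>j=2..\<Delta>. B j) \<le> T" .
    moreover have "(\<Sum>j=1..\<Delta>. B j) = B 1 + (\<Sum>j=2..\<Delta>. B j)"
      using sum.atLeast_Suc_atMost[of 1 \<Delta> B] 4 by (simp add: numeral_2_eq_2)
    moreover have "T \<ge> 0" by (simp add: T_def)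
    ultimately have "(\<Sum>j=1..\<Delta>. B j) \<le> 1000 * T" using B1 by linarith
    then show ?thesis using 4 by (simp add: T_def)
  qed
  then show ?thesis by (simp only: B_def s_def s1_def)
qed

lemma large_of_log_large:
  "\<exists>q0. \<forall>q \<Delta>. q \<ge> q0 \<longrightarrow> 2^\<Delta> \<le> real q \<longrightarrow> 400 * (real \<Delta> + 2)^6 \<le> real q"
proof -
  obtain N where N: "\<And>n. n \<ge> N \<Longrightarrow> 400 * (real n + 2)^6 \<le> 2^n"
    using poly_le_two_power[of 400 6] by blast
  have "400 * (real \<Delta> + 2)^6 \<le> real q" if q: "q \<ge> 400 * (N + 2)^6" "2^\<Delta> \<le> real q" for q \<Delta>
  proof (cases "\<Delta> \<ge> N")
    case True
    then show ?thesis using N[of \<Delta>] q(2) by linarith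
  next
    case False
    then have "400 * (real \<Delta> + 2)^6 \<le> 400 * (real N + 2)^6" by (intro mult_left_mono power_mono) auto
    also have "\<dots> = real (400 * (N + 2)^6)" by (simp add: add.commute)
    also have "\<dots> \<le> real q" using q(1) by (simp only: of_nat_le_iff)
    finally show ?thesis .
  qed
  then show ?thesis by blast
qed

lemma normalized_sum_choose_cyc_count_le:
  assumes q: "q > 0" and \<Delta>: "\<Delta> \<ge> 1"
    and log: "2^\<Delta> \<le> real q" and large: "400 * (real \<Delta> + 2)^6 \<le> real q"
  shows "(1 / fact n) * (\<Sum>j=1..\<Delta>. \<Sum>\<pi>\<in>{\<pi>. \<pi> permutes {1..n}}.
           real ((\<Sum>i=1..j+1. cyc_count n (\<pi> ^^ q) i) choose (\<Delta> - j)))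
    \<le> (if \<Delta> = 1 then 1000
        else if \<Delta> = 2 then 1000 * divisor_sigma 0 q
        else if \<Delta> = 3 then 1000 * divisor_sigma 1 q
        else 1000 * (1 / fact (\<Delta> - 1)) * real q ^ (\<Delta> - 2))"
proof -
  let ?B = "\<lambda>j. moment_majorant ((real j + 2) / 2) q (divisor_sigma 0 q) (divisor_sigma 1 q) (\<Delta> - j)"
  have "(\<Sum>j=1..\<Delta>. \<Sum>\<pi>\<in>{\<pi>. \<pi> permutes {1..n}}.
           real ((\<Sum>i=1..j+1. cyc_count n (\<pi> ^^ q) i) choose (\<Delta> - j)))
      \<le> (\<Sum>j=1..\<Delta>. fact n * ?B j)"
    by (rule sum_mono) (rule sum_choose_cyc_count_le[OF q _ _ log large]; simp)
  also have "\<dots> = fact n * (\<Sum>j=1..\<Delta>. ?B j)" by (simp add: sum_distrib_left)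
  finally have "(1 / fact n) * (\<Sum>j=1..\<Delta>. \<Sum>\<pi>\<in>{\<pi>. \<pi> permutes {1..n}}.
           real ((\<Sum>i=1..j+1. cyc_count n (\<pi> ^^ q) i) choose (\<Delta> - j))) \<le> (\<Sum>j=1..\<Delta>. ?B j)"
    by (simp add: field_simps)
  also have "\<dots> \<le> (if \<Delta> = 1 then 1000 else if \<Delta> = 2 then 1000 * divisor_sigma 0 q
      else if \<Delta> = 3 then 1000 * divisor_sigma 1 q else 1000 * (1 / fact (\<Delta> - 1)) * real q ^ (\<Delta> - 2))"
    by (rule sum_moment_majorants_le[OF q \<Delta> large])
  finally show ?thesis .
qed


theorem lemma6p2:
  shows "\<exists>(q0::nat) (C::real). C > 0 \<and>
    (\<forall>(q::nat) (\<Delta>::nat) (n::nat).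
       q \<ge> q0 \<longrightarrow> \<Delta> \<ge> 1 \<longrightarrow> real \<Delta> \<le> ln (real q) / ln 2 \<longrightarrow> n \<ge> 1 \<longrightarrow>
       (1 / fact n) * (\<Sum>j=1..\<Delta>. \<Sum>\<pi>\<in>{\<pi>. \<pi> permutes {1..n}}.
           real ((\<Sum>i=1..j+1. cyc_count n (\<pi> ^^ q) i) choose (\<Delta> - j)))
       \<le> (if \<Delta> = 1 then C
           else if \<Delta> = 2 then C * divisor_sigma 0 q
           else if \<Delta> = 3 then C * divisor_sigma 1 q
           else C * (1 / fact (\<Delta> - 1)) * real q ^ (\<Delta> - 2)))"
proof -
  obtain q0 where q0: "\<And>q \<Delta>. q \<ge> q0 \<Longrightarrow> 2^\<Delta> \<le> real q \<Longrightarrow> 400 * (real \<Delta> + 2)^6 \<le> real q"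
    using large_of_log_large by blast
  show ?thesis
  proof (intro exI[of _ "max q0 1"] exI[of _ "1000::real"] conjI allI impI)
    fix q \<Delta> n :: nat
    assume q: "max q0 1 \<le> q" and \<Delta>: "1 \<le> \<Delta>" and log: "real \<Delta> \<le> ln (real q) / ln 2"
    then have "ln (2^\<Delta>) \<le> ln (real q)" by (simp add: ln_realpow field_simps)
    then have "2^\<Delta> \<le> real q" using q by simp
    then show "(1 / fact n) * (\<Sum>j=1..\<Delta>. \<Sum>\<pi>\<in>{\<pi>. \<pi> permutes {1..n}}.
           real ((\<Sum>i=1..j+1. cyc_count n (\<pi> ^^ q) i) choose (\<Delta> - j)))
       \<le> (if \<Delta> = 1 then 1000
           else if \<Delta> = 2 then 1000 * divisor_sigma 0 q
           else if \<Delta> = 3 then 1000 * divisor_sigma 1 q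
           else 1000 * (1 / fact (\<Delta> - 1)) * real q ^ (\<Delta> - 2))"
      using q q0 \<Delta> by (intro normalized_sum_choose_cyc_count_le) auto
  qed simp
qed

end
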